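(* Let $R$, $S$ be finite-dimensional systems with Hamiltonians $H_R,H_S$, let $\rho_R$ be a state on $R$, $\rho_S$ a state on $S$ with $[\rho_S,H_S]=0$, and $\rho'_S$ a state on $S$. Write $\sigma_X(t)=e^{-itH_X}\sigma_X e^{itH_X}$. Then the following are equivalent: (i) there exists a time-translation covariant channel $\mathcal{E}$ on $RS$ with $\mathcal{E}(\rho_R\otimes\rho_S)=\rho_R|\rho'_S$; (ii) there exists a channel $\mathcal{E}$ on $RS$ (not necessarily covariant) such that $\mathcal{E}(\rho_R(t)\otimes\rho_S)=\rho_R(t)|\rho'_S(t)$ for every $t\in\mathbb{R}$. Moreover, in direction (ii)$\Rightarrow$(i), the limit $\tilde{\mathcal{E}}:=\lim_{T\to\infty}\frac1T\int_0^T\mathcal{U}_{-t}\circ\mathcal{E}\circ\mathcal{U}_t\,dt$ (with $\mathcal{U}_t=\mathcal{U}^R_t\otimes\mathcal{U}^S_t$) exists, is a time-translation covariant channel, and satisfies $\tilde{\mathcal{E}}(\rho_R\otimes\rho_S)=\rho_R|\rho'_S$.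
   Context: A channel is a completely positive trace-preserving map. $\mathcal{U}^X_t(\sigma)=e^{-itH_X}\sigma e^{itH_X}$. A channel $\mathcal{E}$ on $RS$ is time-translation covariant if $\mathcal{E}\circ(\mathcal{U}^R_t\otimes\mathcal{U}^S_t)=(\mathcal{U}^R_t\otimes\mathcal{U}^S_t)\circ\mathcal{E}$ for all $t\in\mathbb{R}$. The notation $\sigma_R|\tau_S$ denotes some (possibly correlated) bipartite state on $RS$ whose reduced states are $\sigma_R$ on $R$ and $\tau_S$ on $S$ (the statement "$\mathcal{E}(\cdot)=\sigma_R|\tau_S$" means the output has these two marginals). *)

theory Defs
  imports "HOL-Analysis.Henstock_Kurzweil_Integration" "Jordan_Normal_Form.Matrix"
begin

text \<open>A system of dimension n has operators given by n x n complex matrices.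
  The composite system RS has dimension dR * dS; the basis index of RS is
  r * dS + s (Kronecker convention).\<close>

definition mtrace :: "complex mat \<Rightarrow> complex" where
  "mtrace A = (\<Sum>i<dim_row A. A $$ (i, i))"

definition madj :: "complex mat \<Rightarrow> complex mat" where
  "madj A = mat (dim_col A) (dim_row A) (\<lambda>(i, j). cnj (A $$ (j, i)))"

definition hermitian :: "nat \<Rightarrow> complex mat \<Rightarrow> bool" where
  "hermitian n A \<longleftrightarrow> A \<in> carrier_mat n n \<and> madj A = A"

definition psd :: "nat \<Rightarrow> complex mat \<Rightarrow> bool" where
  "psd n A \<longleftrightarrow> A \<in> carrier_mat n n \<and>
     (\<forall>v :: nat \<Rightarrow> complex.
        let q = (\<Sum>i<n. \<Sum>j<n. cnj (v i) * A $$ (i, j) * v j) in Im q = 0 \<and> Re q \<ge> 0)"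

definition density :: "nat \<Rightarrow> complex mat \<Rightarrow> bool" where
  "density n \<rho> \<longleftrightarrow> psd n \<rho> \<and> mtrace \<rho> = 1"

definition kron :: "complex mat \<Rightarrow> complex mat \<Rightarrow> complex mat" where
  "kron A B = mat (dim_row A * dim_row B) (dim_col A * dim_col B)
     (\<lambda>(i, j). A $$ (i div dim_row B, j div dim_col B) * B $$ (i mod dim_row B, j mod dim_col B))"

text \<open>Partial traces on RS: ptrace_S traces out S (result on R), ptrace_R traces out R.\<close>
definition ptrace_S :: "nat \<Rightarrow> nat \<Rightarrow> complex mat \<Rightarrow> complex mat" where
  "ptrace_S dR dS X = mat dR dR (\<lambda>(a, b). \<Sum>s<dS. X $$ (a * dS + s, b * dS + s))"

definition ptrace_R :: "nat \<Rightarrow> nat \<Rightarrow> complex mat \<Rightarrow> complex mat" where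
  "ptrace_R dR dS X = mat dS dS (\<lambda>(p, q). \<Sum>r<dR. X $$ (r * dS + p, r * dS + q))"

definition mexp :: "complex mat \<Rightarrow> complex mat" where
  "mexp A = mat (dim_row A) (dim_col A)
     (\<lambda>(i, j). \<Sum>k. (A ^\<^sub>m k) $$ (i, j) / of_nat (fact k))"

definition evol :: "complex mat \<Rightarrow> real \<Rightarrow> complex mat \<Rightarrow> complex mat" where
  "evol H t \<sigma> = mexp ((- (\<i> * of_real t)) \<cdot>\<^sub>m H) * \<sigma> * mexp ((\<i> * of_real t) \<cdot>\<^sub>m H)"

definition evol2 :: "complex mat \<Rightarrow> complex mat \<Rightarrow> real \<Rightarrow> complex mat \<Rightarrow> complex mat" where
  "evol2 HR HS t X =
     kron (mexp ((- (\<i> * of_real t)) \<cdot>\<^sub>m HR)) (mexp ((- (\<i> * of_real t)) \<cdot>\<^sub>m HS)) * X *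
     kron (mexp ((\<i> * of_real t) \<cdot>\<^sub>m HR)) (mexp ((\<i> * of_real t) \<cdot>\<^sub>m HS))"

text \<open>id_k \<otimes> E acting on (k*N) x (k*N) matrices (block-wise application of E).\<close>
definition id_tensor :: "nat \<Rightarrow> nat \<Rightarrow> (complex mat \<Rightarrow> complex mat) \<Rightarrow> complex mat \<Rightarrow> complex mat" where
  "id_tensor k N E X = mat (k * N) (k * N)
     (\<lambda>(i, j). E (mat N N (\<lambda>(p, q). X $$ ((i div N) * N + p, (j div N) * N + q))) $$ (i mod N, j mod N))"

definition channel :: "nat \<Rightarrow> (complex mat \<Rightarrow> complex mat) \<Rightarrow> bool" where
  "channel N E \<longleftrightarrow>
     (\<forall>X \<in> carrier_mat N N. E X \<in> carrier_mat N N) \<and>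
     (\<forall>X \<in> carrier_mat N N. \<forall>Y \<in> carrier_mat N N. E (X + Y) = E X + E Y) \<and>
     (\<forall>X \<in> carrier_mat N N. \<forall>c :: complex. E (c \<cdot>\<^sub>m X) = c \<cdot>\<^sub>m E X) \<and>
     (\<forall>X \<in> carrier_mat N N. mtrace (E X) = mtrace X) \<and>
     (\<forall>k X. psd (k * N) X \<longrightarrow> psd (k * N) (id_tensor k N E X))"

definition tt_covariant :: "nat \<Rightarrow> nat \<Rightarrow> complex mat \<Rightarrow> complex mat \<Rightarrow> (complex mat \<Rightarrow> complex mat) \<Rightarrow> bool" where
  "tt_covariant dR dS HR HS E \<longleftrightarrow>
     (\<forall>t :: real. \<forall>X \<in> carrier_mat (dR * dS) (dR * dS).
        E (evol2 HR HS t X) = evol2 HR HS t (E X))"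

end

(*
  Diagonalising H_R and H_S yields a spectral decomposition of U_t = exp(-itH_R) \<otimes> exp(-itH_S)
  with real frequencies, so every entry of U_(-t) E(U_t X U_(-t)) U_t is a finite trigonometric sum in t.
  Its long-time average exists and is the sum of the zero-frequency terms.  The averaged map is
  again a channel (linearity and the trace survive averaging, and positivity is a closed
  condition) and it is covariant, because averaging is invariant under time shifts.  If E
  satisfies (ii), then, as [\<rho>_S, H_S] = 0, the marginals of U_(-t) E(U_t (\<rho>_R \<otimes> \<rho>_S) U_(-t)) U_t
  are \<rho>_R and \<rho>'_S for every t, hence so are those of the average, which gives (i).
  Conversely, covariance turns the marginal conditions at time 0 into those at every time t.
*)

theory Submission
  imports Defs "Jordan_Normal_Form.Spectral_Radius" "HOL-Analysis.Complex_Transcendental"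
begin

lemma index_mult_mat_sum:
  assumes "A \<in> carrier_mat n m" "B \<in> carrier_mat m p" "i < n" "j < p"
  shows "(A * B) $$ (i, j) = (\<Sum>k<m. A $$ (i, k) * B $$ (k, j))"
  using assms by (auto simp: scalar_prod_def lessThan_atLeast0 intro!: sum.cong)

lemma index_mult3_mat_sum:
  assumes "A \<in> carrier_mat n n" "M \<in> carrier_mat n n" "B \<in> carrier_mat n n" "x < n" "y < n"
  shows "(A * M * B) $$ (x, y) = (\<Sum>p<n. \<Sum>q<n. A $$ (x, p) * M $$ (p, q) * B $$ (q, y))"
proof -
  have "(A * M * B) $$ (x, y) = (\<Sum>q<n. (A * M) $$ (x, q) * B $$ (q, y))"
    using assms by (intro index_mult_mat_sum) auto
  also have "\<dots> = (\<Sum>q<n. (\<Sum>p<n. A $$ (x, p) * M $$ (p, q)) * B $$ (q, y))"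
    using assms by (intro sum.cong refl) (subst index_mult_mat_sum, auto)
  also have "\<dots> = (\<Sum>p<n. \<Sum>q<n. A $$ (x, p) * M $$ (p, q) * B $$ (q, y))"
    by (simp only: sum_distrib_right, subst sum.swap, rule refl)
  finally show ?thesis .
qed

lemma pair_index_less: "r < (m::nat) \<Longrightarrow> s < n \<Longrightarrow> r * n + s < m * n"
proof -
  assume "r < m" "s < n"
  then have "r * n + s < Suc r * n" by simp
  also have "\<dots> \<le> m * n" using \<open>r < m\<close> by (intro mult_le_mono1) simp
  finally show ?thesis .
qed

lemma div_less_of_less_mult: "i < m * (n::nat) \<Longrightarrow> i div n < m"
  by (simp add: less_mult_imp_div_less)

lemma mod_less_of_less_mult: "i < m * (n::nat) \<Longrightarrow> i mod n < n"
  by (metis mod_less_divisor mult_0_right not_less0 zero_less_iff_neq_zero)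

lemma sum_lessThan_add: "(\<Sum>a<k + m. f a) = (\<Sum>a<(k::nat). f a) + (\<Sum>p<m. f (k + p))"
  by (induction m) (auto simp: add.assoc)

lemma sum_lessThan_mult: "(\<Sum>a<(m::nat) * n. f a) = (\<Sum>r<m. \<Sum>s<n. f (r * n + s))"
proof (induction m)
  case (Suc m)
  have "{..<Suc m * n} = {..<m * n} \<union> {m * n..<m * n + n}" by auto
  moreover have "(\<Sum>a\<in>{m * n..<m * n + n}. f a) = (\<Sum>s<n. f (m * n + s))"
    by (rule sum.reindex_bij_witness[of _ "\<lambda>a. m * n + a" "\<lambda>a. a - m * n"]) auto
  ultimately show ?case using Suc by (simp add: sum.union_disjoint add.commute ivl_disj_int)
qed simp

subsection \<open>Orthonormal families\<close>

text \<open>A vector of dimension \<open>n\<close> is a function \<open>nat \<Rightarrow> complex\<close> of which only the values on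
  \<open>{..<n}\<close> matter; \<open>orthonormal n m u\<close> says that \<open>u 0, \<dots>, u (m - 1)\<close> are orthonormal.\<close>

definition cinner_on :: "nat \<Rightarrow> (nat \<Rightarrow> complex) \<Rightarrow> (nat \<Rightarrow> complex) \<Rightarrow> complex" where
  "cinner_on n x y = (\<Sum>i<n. cnj (x i) * y i)"

definition orthonormal :: "nat \<Rightarrow> nat \<Rightarrow> (nat \<Rightarrow> nat \<Rightarrow> complex) \<Rightarrow> bool" where
  "orthonormal n m u \<longleftrightarrow> (\<forall>a<m. \<forall>b<m. cinner_on n (u a) (u b) = (if a = b then 1 else 0))"

lemma cinner_on_commute: "cinner_on n y x = cnj (cinner_on n x y)"
  unfolding cinner_on_def by (simp add: mult.commute)

lemma cinner_on_self: "cinner_on n x x = complex_of_real (\<Sum>i<n. (cmod (x i))\<^sup>2)"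
  unfolding cinner_on_def of_real_sum by (intro sum.cong refl) (metis complex_norm_square mult.commute)

lemma cinner_on_self_eq_0: "cinner_on n x x = 0 \<Longrightarrow> i < n \<Longrightarrow> x i = 0"
proof -
  assume "cinner_on n x x = 0" "i < n"
  then have "(\<Sum>i<n. (cmod (x i))\<^sup>2) = 0" by (simp only: cinner_on_self of_real_eq_0_iff)
  then have "\<forall>i\<in>{..<n}. (cmod (x i))\<^sup>2 = 0" by (subst (asm) sum_nonneg_eq_0_iff) auto
  with \<open>i < n\<close> show "x i = 0" by auto
qed

lemma cinner_on_normalize:
  assumes "cinner_on n v v \<noteq> 0"
  obtains c where "c \<noteq> 0" "cinner_on n (\<lambda>i. c * v i) (\<lambda>i. c * v i) = 1"
proof -
  define r where "r = (\<Sum>i<n. (cmod (v i))\<^sup>2)"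
  have "r \<ge> 0" unfolding r_def by (intro sum_nonneg) auto
  moreover have "r \<noteq> 0" using assms unfolding cinner_on_self r_def of_real_eq_0_iff .
  ultimately have r0: "r > 0" by simp
  define c where "c = complex_of_real (1 / sqrt r)"
  have "cinner_on n (\<lambda>i. c * v i) (\<lambda>i. c * v i) = (cnj c * c) * cinner_on n v v"
    unfolding cinner_on_def by (simp add: sum_distrib_left algebra_simps)
  also have "cnj c * c = complex_of_real (1 / r)" unfolding c_def using r0
    by (simp flip: of_real_mult add: real_sqrt_mult_self)
  also have "cinner_on n v v = complex_of_real r" unfolding cinner_on_self r_def ..
  finally have "cinner_on n (\<lambda>i. c * v i) (\<lambda>i. c * v i) = 1" using r0 by (simp flip: of_real_mult)
  moreover have "c \<noteq> 0" using r0 unfolding c_def by simp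
  ultimately show thesis using that by blast
qed

lemma orthonormal_extend_one:
  assumes o: "orthonormal n m u" and mn: "m < n"
  obtains w where "cinner_on n w w = 1" "\<forall>a<m. cinner_on n (u a) w = 0"
proof -
  \<comment> \<open>project the standard basis vectors onto the orthogonal complement; their traces
    add up to \<open>n - m > 0\<close>, so one of the projections is nonzero\<close>
  define P where "P j i = (if i = j then 1 else 0) - (\<Sum>a<m. u a i * cnj (u a j))" for j i
  have orth: "cinner_on n (u b) (P j) = 0" if "b < m" "j < n" for b j
  proof -
    have "cinner_on n (u b) (P j) = (\<Sum>i<n. cnj (u b i) * (if i = j then 1 else 0))
        - (\<Sum>i<n. \<Sum>a<m. cnj (u b i) * u a i * cnj (u a j))"
      unfolding cinner_on_def P_def
      by (simp add: right_diff_distrib sum_subtractf sum_distrib_left mult.assoc)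
    also have "(\<Sum>i<n. cnj (u b i) * (if i = j then 1 else 0)) = cnj (u b j)"
      using that by (simp add: if_distrib cong: if_cong)
    also have "(\<Sum>i<n. \<Sum>a<m. cnj (u b i) * u a i * cnj (u a j))
        = (\<Sum>a<m. cinner_on n (u b) (u a) * cnj (u a j))"
      unfolding cinner_on_def by (subst sum.swap) (simp add: sum_distrib_right)
    also have "\<dots> = (\<Sum>a<m. if b = a then cnj (u a j) else 0)"
      using o that unfolding orthonormal_def by (intro sum.cong) auto
    also have "\<dots> = cnj (u b j)" using that by simp
    finally show ?thesis by simp
  qed
  have "\<exists>j<n. \<exists>i<n. P j i \<noteq> 0"
  proof (rule ccontr)
    assume "\<not> ?thesis"
    then have "(\<Sum>j<n. P j j) = 0" by auto
    moreover have "(\<Sum>j<n. P j j) = of_nat n - (\<Sum>a<m. cinner_on n (u a) (u a))"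
      unfolding P_def cinner_on_def
      by (simp add: sum_subtractf, subst sum.swap) (simp add: mult.commute)
    moreover have "(\<Sum>a<m. cinner_on n (u a) (u a)) = of_nat m"
      using o unfolding orthonormal_def by simp
    ultimately show False using mn by simp
  qed
  then obtain j i where ji: "j < n" "i < n" "P j i \<noteq> 0" by blast
  then have "cinner_on n (P j) (P j) \<noteq> 0" using cinner_on_self_eq_0 by blast
  then obtain c where c: "cinner_on n (\<lambda>i. c * P j i) (\<lambda>i. c * P j i) = 1"
    by (rule cinner_on_normalize)
  moreover have "cinner_on n (u a) (\<lambda>i. c * P j i) = c * cinner_on n (u a) (P j)" for a
    unfolding cinner_on_def by (simp add: sum_distrib_left mult.left_commute)
  ultimately show thesis using that orth ji(1) by auto
qed

lemma orthonormal_extend: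
  assumes "orthonormal n m u" "m \<le> n"
  obtains b where "orthonormal n n b" "\<forall>a<m. b a = u a"
  using assms
proof (induction "n - m" arbitrary: m u)
  case 0 then show ?case by auto
next
  case (Suc d)
  then have mn: "m < n" by simp
  obtain w where w: "cinner_on n w w = 1" "\<forall>a<m. cinner_on n (u a) w = 0"
    using orthonormal_extend_one[OF Suc(4) mn] by blast
  have "\<forall>a<m. cinner_on n w (u a) = 0"
    using w(2) cinner_on_commute[of n w] by (metis complex_cnj_zero)
  then have "orthonormal n (Suc m) (u(m := w))"
    using Suc(4) w unfolding orthonormal_def by (auto simp: less_Suc_eq)
  moreover have "d = n - Suc m" using Suc(2) by arith
  ultimately show ?case
    using Suc(1)[of "Suc m" "u(m := w)"] Suc(3) mn by (auto simp: Suc_le_eq)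
qed

lemma orthonormal_basis_complete:
  assumes o: "orthonormal n n u" and i: "i < n" and j: "j < n"
  shows "(\<Sum>a<n. u a i * cnj (u a j)) = (if i = j then 1 else 0)"
proof -
  \<comment> \<open>the matrix of the basis has a left inverse, hence it is also a right inverse\<close>
  define U where "U = mat n n (\<lambda>(i, a). u a i)"
  define U' where "U' = mat n n (\<lambda>(a, i). cnj (u a i))"
  have c: "U \<in> carrier_mat n n" "U' \<in> carrier_mat n n" unfolding U_def U'_def by auto
  have "U' * U = 1\<^sub>m n"
  proof (rule eq_matI)
    fix a b assume "a < dim_row (1\<^sub>m n)" "b < dim_col (1\<^sub>m n)"
    then have ab: "a < n" "b < n" by auto
    have "(U' * U) $$ (a, b) = cinner_on n (u a) (u b)"
      unfolding cinner_on_def by (subst index_mult_mat_sum[OF c(2) c(1) ab]) (simp add: U'_def U_def ab)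
    then show "(U' * U) $$ (a, b) = 1\<^sub>m n $$ (a, b)" using o ab unfolding orthonormal_def by auto
  qed (use c in auto)
  then have "U * U' = 1\<^sub>m n" by (rule mat_mult_left_right_inverse[OF c(2) c(1)])
  then have "(U * U') $$ (i, j) = (if i = j then 1 else 0)" using i j by simp
  then show ?thesis by (subst (asm) index_mult_mat_sum[OF c(1) c(2) i j]) (simp add: U'_def U_def i j)
qed

lemma orthonormal_basis_expand:
  assumes o: "orthonormal n n b" and i: "i < n"
  shows "y i = (\<Sum>a<n. b a i * cinner_on n (b a) y)"
proof -
  have "(\<Sum>a<n. b a i * cinner_on n (b a) y) = (\<Sum>l<n. (\<Sum>a<n. b a i * cnj (b a l)) * y l)"
    unfolding cinner_on_def
    by (simp add: sum_distrib_left sum_distrib_right mult.assoc, subst sum.swap, simp)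
  also have "\<dots> = (\<Sum>l<n. if i = l then y l else 0)"
    using orthonormal_basis_complete[OF o i] by (intro sum.cong) auto
  also have "\<dots> = y i" using i by simp
  finally show ?thesis by simp
qed

subsection \<open>Spectral theorem for Hermitian matrices\<close>

definition mat_apply :: "nat \<Rightarrow> complex mat \<Rightarrow> (nat \<Rightarrow> complex) \<Rightarrow> nat \<Rightarrow> complex" where
  "mat_apply n H x = (\<lambda>i. \<Sum>j<n. H $$ (i, j) * x j)"

lemma hermitian_index:
  assumes "hermitian n H" "i < n" "j < n"
  shows "H $$ (i, j) = cnj (H $$ (j, i))"
proof -
  have H: "H \<in> carrier_mat n n" "madj H = H" using assms(1) unfolding hermitian_def by auto
  have "madj H $$ (i, j) = cnj (H $$ (j, i))" using H(1) assms(2,3) unfolding madj_def by auto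
  then show ?thesis using H(2) by simp
qed

lemma hermitian_cinner_on_apply:
  assumes "hermitian n H"
  shows "cinner_on n x (mat_apply n H y) = cinner_on n (mat_apply n H x) y"
proof -
  have "cinner_on n x (mat_apply n H y) = (\<Sum>j<n. (\<Sum>i<n. cnj (x i) * H $$ (i, j)) * y j)"
    unfolding cinner_on_def mat_apply_def
    by (simp add: sum_distrib_left sum_distrib_right mult.assoc, subst sum.swap, simp)
  also have "\<dots> = (\<Sum>j<n. cnj (\<Sum>i<n. H $$ (j, i) * x i) * y j)"
    unfolding cnj_sum
  proof (intro sum.cong refl arg_cong2[where f = "(*)"])
    fix i j assume "i \<in> {..<n}" "j \<in> {..<n}"
    then show "cnj (x i) * H $$ (i, j) = cnj (H $$ (j, i) * x i)"
      using hermitian_index[OF assms, of i j] by (simp add: mult.commute)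
  qed
  finally show ?thesis unfolding cinner_on_def mat_apply_def .
qed

lemma hermitian_eigenvalue_real:
  assumes hH: "hermitian n H" and ev: "\<forall>i<n. mat_apply n H v i = e * v i"
    and v: "cinner_on n v v \<noteq> 0"
  shows "e = complex_of_real (Re e)"
proof -
  obtain r where r: "cinner_on n v v = complex_of_real r" using cinner_on_self by blast
  have x: "cinner_on n v (mat_apply n H v) = e * complex_of_real r"
    unfolding r[symmetric] cinner_on_def using ev by (simp add: sum_distrib_left mult.left_commute)
  have "cinner_on n v (mat_apply n H v) = cnj (cinner_on n v (mat_apply n H v))"
    using hermitian_cinner_on_apply[OF hH, of v v] cinner_on_commute[of n "mat_apply n H v" v] by simp
  then have "e * complex_of_real r = cnj e * complex_of_real r" unfolding x by simp
  moreover have "r \<noteq> 0" using v r by auto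
  ultimately have "e = cnj e" by simp
  then show ?thesis by (simp add: complex_eq_iff)
qed

lemma complex_mat_eigenvector:
  assumes "(A :: complex mat) \<in> carrier_mat m m" "0 < m"
  obtains c e where "c \<in> carrier_vec m" "c \<noteq> 0\<^sub>v m" "A *\<^sub>v c = e \<cdot>\<^sub>v c"
proof -
  obtain e where "eigenvalue A e" using spectrum_non_empty[OF assms] unfolding spectrum_def by auto
  then obtain c where "eigenvector A c e" unfolding eigenvalue_def by blast
  then show thesis using that assms(1) unfolding eigenvector_def by auto
qed

lemma hermitian_apply_complement:
  assumes hH: "hermitian n H" and b: "orthonormal n n b"
    and eig: "\<forall>a<k. \<forall>i<n. mat_apply n H (b a) i = lam a * b a i"
    and q: "k \<le> q" "q < n" and i: "i < n"
  shows "mat_apply n H (b q) i = (\<Sum>p<n - k. b (k + p) i * cinner_on n (b (k + p)) (mat_apply n H (b q)))"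
proof -
  have zero: "cinner_on n (b a) (mat_apply n H (b q)) = 0" if a: "a < k" for a
  proof -
    have "cinner_on n (b a) (mat_apply n H (b q)) = cinner_on n (mat_apply n H (b a)) (b q)"
      by (rule hermitian_cinner_on_apply[OF hH])
    also have "\<dots> = cinner_on n (\<lambda>i. lam a * b a i) (b q)"
      unfolding cinner_on_def using eig a by (intro sum.cong refl) auto
    also have "\<dots> = cnj (lam a) * cinner_on n (b a) (b q)"
      unfolding cinner_on_def by (simp add: sum_distrib_left mult.assoc)
    finally show ?thesis using b a q unfolding orthonormal_def by auto
  qed
  have "mat_apply n H (b q) i = (\<Sum>a<k + (n - k). b a i * cinner_on n (b a) (mat_apply n H (b q)))"
    using orthonormal_basis_expand[OF b i] q by simp
  also have "\<dots> = (\<Sum>p<n - k. b (k + p) i * cinner_on n (b (k + p)) (mat_apply n H (b q)))"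
    by (simp add: sum_lessThan_add zero)
  finally show ?thesis .
qed

lemma cinner_on_basis_combination:
  assumes b: "orthonormal n n b" and a: "a < n"
  shows "cinner_on n (b a) (\<lambda>i. \<Sum>q<n - k. b (k + q) i * c q) = (if a < k then 0 else c (a - k))"
proof -
  have "cinner_on n (b a) (\<lambda>i. \<Sum>q<n - k. b (k + q) i * c q) =
      (\<Sum>q<n - k. c q * cinner_on n (b a) (b (k + q)))"
    unfolding cinner_on_def
    by (simp only: sum_distrib_left, subst sum.swap, intro sum.cong refl, simp add: mult_ac)
  also have "\<dots> = (\<Sum>q<n - k. if q = a - k \<and> k \<le> a then c q else 0)"
    using b a by (intro sum.cong refl) (auto simp: orthonormal_def)
  also have "\<dots> = (if a < k then 0 else c (a - k))"
    using a by (cases "a < k") auto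
  finally show ?thesis .
qed

lemma hermitian_compression_eigenvector:
  assumes hH: "hermitian n H" and b: "orthonormal n n b"
    and eig: "\<forall>a<k. \<forall>i<n. mat_apply n H (b a) i = lam a * b a i"
    and ev: "\<forall>p<n - k. (\<Sum>q<n - k. cinner_on n (b (k + p)) (mat_apply n H (b (k + q))) * c q) = e * c p"
    and i: "i < n"
  shows "mat_apply n H (\<lambda>i. \<Sum>q<n - k. b (k + q) i * c q) i = e * (\<Sum>q<n - k. b (k + q) i * c q)"
proof -
  have "mat_apply n H (\<lambda>i. \<Sum>q<n - k. b (k + q) i * c q) i = (\<Sum>q<n - k. c q * mat_apply n H (b (k + q)) i)"
    unfolding mat_apply_def
    by (simp only: sum_distrib_left, subst sum.swap, intro sum.cong refl, simp add: mult_ac)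
  also have "\<dots> = (\<Sum>q<n - k. c q *
      (\<Sum>p<n - k. b (k + p) i * cinner_on n (b (k + p)) (mat_apply n H (b (k + q)))))"
    using hermitian_apply_complement[OF hH b eig _ _ i] by (intro sum.cong refl) auto
  also have "\<dots> = (\<Sum>p<n - k. b (k + p) i *
      (\<Sum>q<n - k. cinner_on n (b (k + p)) (mat_apply n H (b (k + q))) * c q))"
    by (simp only: sum_distrib_left, subst sum.swap, intro sum.cong refl, simp add: mult_ac)
  also have "\<dots> = e * (\<Sum>q<n - k. b (k + q) i * c q)"
    using ev by (simp add: sum_distrib_left mult.left_commute)
  finally show ?thesis .
qed

lemma hermitian_eigenvector_orthogonal:
  assumes hH: "hermitian n H" and o: "orthonormal n k u"
    and eig: "\<forall>a<k. \<forall>i<n. mat_apply n H (u a) i = lam a * u a i" and kn: "k < n"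
  obtains v e where "cinner_on n v v \<noteq> 0" "\<forall>a<k. cinner_on n (u a) v = 0"
    "\<forall>i<n. mat_apply n H v i = e * v i"
proof -
  obtain b where b: "orthonormal n n b" "\<forall>a<k. b a = u a"
    using orthonormal_extend[OF o less_imp_le[OF kn]] by blast
  have eig_b: "\<forall>a<k. \<forall>i<n. mat_apply n H (b a) i = lam a * b a i" using eig b(2) by simp
  define m where "m = n - k"
  \<comment> \<open>an eigenvector of the compression of \<open>H\<close> to the complement of the \<open>u a\<close>\<close>
  define M where "M = mat m m (\<lambda>(p, q). cinner_on n (b (k + p)) (mat_apply n H (b (k + q))))"
  have M: "M \<in> carrier_mat m m" unfolding M_def by simp
  obtain c e where c: "c \<in> carrier_vec m" "c \<noteq> 0\<^sub>v m" "M *\<^sub>v c = e \<cdot>\<^sub>v c"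
    using complex_mat_eigenvector[OF M] kn unfolding m_def by auto
  have "(\<Sum>q<m. cinner_on n (b (k + p)) (mat_apply n H (b (k + q))) * c $ q) = e * c $ p" if "p < m" for p
    using arg_cong[OF c(3), of "\<lambda>x. x $ p"] that M c(1)
    unfolding M_def by (simp add: scalar_prod_def lessThan_atLeast0)
  then have Hv: "\<forall>i<n. mat_apply n H (\<lambda>i. \<Sum>q<m. b (k + q) i * c $ q) i = e * (\<Sum>q<m. b (k + q) i * c $ q)"
    using hermitian_compression_eigenvector[OF hH b(1) eig_b, of "\<lambda>q. c $ q" e] unfolding m_def by blast
  obtain p where p: "p < m" "c $ p \<noteq> 0"
  proof -
    have "\<exists>p<m. c $ p \<noteq> 0"
    proof (rule ccontr)
      assume "\<not> ?thesis"
      then have "c = 0\<^sub>v m" using c(1) by (intro eq_vecI) auto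
      then show False using c(2) by simp
    qed
    then show thesis using that by blast
  qed
  have "cinner_on n (\<lambda>i. \<Sum>q<m. b (k + q) i * c $ q) (\<lambda>i. \<Sum>q<m. b (k + q) i * c $ q) \<noteq> 0"
  proof
    assume "cinner_on n (\<lambda>i. \<Sum>q<m. b (k + q) i * c $ q) (\<lambda>i. \<Sum>q<m. b (k + q) i * c $ q) = 0"
    then have "\<forall>i<n. (\<Sum>q<m. b (k + q) i * c $ q) = 0" using cinner_on_self_eq_0 by blast
    then have "cinner_on n (b (k + p)) (\<lambda>i. \<Sum>q<m. b (k + q) i * c $ q) = 0"
      unfolding cinner_on_def by simp
    then show False using cinner_on_basis_combination[OF b(1), of "k + p" k "\<lambda>q. c $ q"] p
      unfolding m_def by simp
  qed
  moreover have "\<forall>a<k. cinner_on n (u a) (\<lambda>i. \<Sum>q<m. b (k + q) i * c $ q) = 0"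
  proof (intro allI impI)
    fix a assume "a < k"
    then show "cinner_on n (u a) (\<lambda>i. \<Sum>q<m. b (k + q) i * c $ q) = 0"
      using cinner_on_basis_combination[OF b(1), of a k "\<lambda>q. c $ q"] b(2) kn unfolding m_def by simp
  qed
  ultimately show thesis using that Hv by blast
qed

lemma hermitian_orthonormal_eigenvectors:
  assumes hH: "hermitian n H" and kn: "k \<le> n"
  shows "\<exists>u lam. orthonormal n k u \<and>
    (\<forall>a<k. \<forall>i<n. mat_apply n H (u a) i = complex_of_real (lam a) * u a i)"
  using kn
proof (induction k)
  case 0 then show ?case by (auto simp: orthonormal_def)
next
  case (Suc k)
  then obtain u lam where o: "orthonormal n k u"
    and eig: "\<forall>a<k. \<forall>i<n. mat_apply n H (u a) i = complex_of_real (lam a) * u a i"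
    by auto
  obtain v e where v: "cinner_on n v v \<noteq> 0" "\<forall>a<k. cinner_on n (u a) v = 0"
    and ev: "\<forall>i<n. mat_apply n H v i = e * v i"
    using hermitian_eigenvector_orthogonal[OF hH o eig] Suc(2) by auto
  obtain c where c: "c \<noteq> 0" "cinner_on n (\<lambda>i. c * v i) (\<lambda>i. c * v i) = 1"
    using cinner_on_normalize[OF v(1)] by blast
  define w where "w i = c * v i" for i
  have "\<forall>a<k. cinner_on n (u a) w = 0"
    using v(2) unfolding w_def cinner_on_def by (simp add: sum_distrib_left[symmetric] mult.left_commute)
  then have "\<forall>a<k. cinner_on n w (u a) = 0"
    using cinner_on_commute[of n w] by (metis complex_cnj_zero)
  then have "orthonormal n (Suc k) (u(k := w))"
    using o c(2) \<open>\<forall>a<k. cinner_on n (u a) w = 0\<close>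
    unfolding orthonormal_def w_def by (auto simp: less_Suc_eq)
  moreover have "\<forall>i<n. mat_apply n H w i = complex_of_real (Re e) * w i"
  proof -
    have "complex_of_real (Re e) = e" using hermitian_eigenvalue_real[OF hH ev v(1)] by simp
    moreover have "mat_apply n H w i = c * mat_apply n H v i" for i
      unfolding w_def mat_apply_def by (simp add: sum_distrib_left mult.left_commute)
    ultimately show ?thesis using ev unfolding w_def by simp
  qed
  ultimately have "orthonormal n (Suc k) (u(k := w)) \<and> (\<forall>a<Suc k. \<forall>i<n.
      mat_apply n H ((u(k := w)) a) i = complex_of_real ((lam(k := Re e)) a) * (u(k := w)) a i)"
    using eig by (auto simp: less_Suc_eq)
  then show ?case by blast
qed

definition spectral_mat :: "nat \<Rightarrow> (nat \<Rightarrow> nat \<Rightarrow> complex) \<Rightarrow> (nat \<Rightarrow> complex) \<Rightarrow> complex mat" where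
  "spectral_mat n u \<mu> = mat n n (\<lambda>(i, j). \<Sum>a<n. \<mu> a * u a i * cnj (u a j))"

lemma spectral_mat_carrier [simp]: "spectral_mat n u \<mu> \<in> carrier_mat n n"
  and dim_spectral_mat [simp]: "dim_row (spectral_mat n u \<mu>) = n" "dim_col (spectral_mat n u \<mu>) = n"
  unfolding spectral_mat_def by auto

lemma index_spectral_mat [simp]:
  "i < n \<Longrightarrow> j < n \<Longrightarrow> spectral_mat n u \<mu> $$ (i, j) = (\<Sum>a<n. \<mu> a * u a i * cnj (u a j))"
  unfolding spectral_mat_def by simp

theorem hermitian_spectral_decomposition:
  assumes hH: "hermitian n H"
  obtains u lam where "orthonormal n n u" "H = spectral_mat n u (\<lambda>a. complex_of_real (lam a))"
proof -
  obtain u lam where o: "orthonormal n n u"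
    and eig: "\<forall>a<n. \<forall>i<n. mat_apply n H (u a) i = complex_of_real (lam a) * u a i"
    using hermitian_orthonormal_eigenvectors[OF hH order.refl] by blast
  have Hc: "H \<in> carrier_mat n n" using hH unfolding hermitian_def by auto
  have "H = spectral_mat n u (\<lambda>a. complex_of_real (lam a))"
  proof (rule eq_matI)
    fix i j assume "i < dim_row (spectral_mat n u (\<lambda>a. complex_of_real (lam a)))"
      "j < dim_col (spectral_mat n u (\<lambda>a. complex_of_real (lam a)))"
    then have ij: "i < n" "j < n" by auto
    have "H $$ (i, j) = (\<Sum>l<n. H $$ (i, l) * (if l = j then 1 else 0))"
      using ij by (simp add: if_distrib cong: if_cong)
    also have "\<dots> = (\<Sum>l<n. H $$ (i, l) * (\<Sum>a<n. u a l * cnj (u a j)))"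
      using orthonormal_basis_complete[OF o _ ij(2)] by (intro sum.cong refl) auto
    also have "\<dots> = (\<Sum>a<n. mat_apply n H (u a) i * cnj (u a j))"
      unfolding mat_apply_def
      by (simp only: sum_distrib_left sum_distrib_right, subst sum.swap, intro sum.cong refl, simp add: mult_ac)
    also have "\<dots> = spectral_mat n u (\<lambda>a. complex_of_real (lam a)) $$ (i, j)"
      using eig ij by simp
    finally show "H $$ (i, j) = spectral_mat n u (\<lambda>a. complex_of_real (lam a)) $$ (i, j)" .
  qed (use Hc in auto)
  with o show thesis using that by blast
qed

lemma spectral_mat_mult:
  assumes o: "orthonormal n n u"
  shows "spectral_mat n u \<alpha> * spectral_mat n u \<beta> = spectral_mat n u (\<lambda>a. \<alpha> a * \<beta> a)"
proof (rule eq_matI)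
  fix i j assume "i < dim_row (spectral_mat n u (\<lambda>a. \<alpha> a * \<beta> a))"
    "j < dim_col (spectral_mat n u (\<lambda>a. \<alpha> a * \<beta> a))"
  then have ij: "i < n" "j < n" by auto
  have "(spectral_mat n u \<alpha> * spectral_mat n u \<beta>) $$ (i, j) =
      (\<Sum>l<n. (\<Sum>a<n. \<alpha> a * u a i * cnj (u a l)) * (\<Sum>b<n. \<beta> b * u b l * cnj (u b j)))"
    using ij by (subst index_mult_mat_sum[of _ n n _ n]) auto
  also have "\<dots> = (\<Sum>l<n. \<Sum>a<n. \<Sum>b<n. (\<alpha> a * u a i * cnj (u a l)) * (\<beta> b * u b l * cnj (u b j)))"
    by (simp only: sum_product)
  also have "\<dots> = (\<Sum>a<n. \<Sum>b<n. \<Sum>l<n. (\<alpha> a * u a i * cnj (u a l)) * (\<beta> b * u b l * cnj (u b j)))"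
    by (subst sum.swap) (rule sum.cong[OF refl], rule sum.swap)
  also have "\<dots> = (\<Sum>a<n. \<Sum>b<n. \<alpha> a * \<beta> b * u a i * cnj (u b j) * cinner_on n (u a) (u b))"
    unfolding cinner_on_def sum_distrib_left by (intro sum.cong refl) (simp add: mult_ac)
  also have "\<dots> = (\<Sum>a<n. \<Sum>b<n. if b = a then \<alpha> a * \<beta> b * u a i * cnj (u b j) else 0)"
    using o unfolding orthonormal_def by (intro sum.cong refl) auto
  also have "\<dots> = spectral_mat n u (\<lambda>a. \<alpha> a * \<beta> a) $$ (i, j)" using ij by simp
  finally show "(spectral_mat n u \<alpha> * spectral_mat n u \<beta>) $$ (i, j) =
    spectral_mat n u (\<lambda>a. \<alpha> a * \<beta> a) $$ (i, j)" .
qed auto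

lemma spectral_mat_one:
  assumes "orthonormal n n u"
  shows "spectral_mat n u (\<lambda>a. 1) = 1\<^sub>m n"
  by (rule eq_matI) (use orthonormal_basis_complete[OF assms] in auto)

lemma spectral_mat_power:
  assumes o: "orthonormal n n u"
  shows "spectral_mat n u \<mu> ^\<^sub>m k = spectral_mat n u (\<lambda>a. \<mu> a ^ k)"
  by (induction k) (simp_all add: spectral_mat_one[OF o] spectral_mat_mult[OF o] mult.commute)

lemma smult_spectral_mat: "c \<cdot>\<^sub>m spectral_mat n u \<mu> = spectral_mat n u (\<lambda>a. c * \<mu> a)"
  by (rule eq_matI) (auto simp: sum_distrib_left mult_ac)

lemma madj_spectral_mat: "madj (spectral_mat n u \<mu>) = spectral_mat n u (\<lambda>a. cnj (\<mu> a))"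
  unfolding madj_def by (rule eq_matI) (auto simp: cnj_sum mult_ac)

lemma mexp_spectral_mat:
  assumes o: "orthonormal n n u"
  shows "mexp (spectral_mat n u \<mu>) = spectral_mat n u (\<lambda>a. exp (\<mu> a))"
proof (rule eq_matI)
  fix i j assume "i < dim_row (spectral_mat n u (\<lambda>a. exp (\<mu> a)))"
    "j < dim_col (spectral_mat n u (\<lambda>a. exp (\<mu> a)))"
  then have ij: "i < n" "j < n" by auto
  have exp_sums: "(\<lambda>k. x ^ k / of_nat (fact k)) sums exp x" for x :: complex
    using exp_converges[of x] by (simp add: scaleR_conv_of_real divide_inverse_commute of_real_fact)
  have "(\<lambda>k. (spectral_mat n u \<mu> ^\<^sub>m k) $$ (i, j) / of_nat (fact k)) =
      (\<lambda>k. \<Sum>a<n. (u a i * cnj (u a j)) * (\<mu> a ^ k / of_nat (fact k)))"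
    unfolding spectral_mat_power[OF o] using ij by (auto simp: sum_divide_distrib mult_ac)
  moreover have "(\<lambda>k. \<Sum>a<n. (u a i * cnj (u a j)) * (\<mu> a ^ k / of_nat (fact k)))
      sums (\<Sum>a<n. (u a i * cnj (u a j)) * exp (\<mu> a))"
    by (intro sums_sum sums_mult exp_sums)
  ultimately have "(\<Sum>k. (spectral_mat n u \<mu> ^\<^sub>m k) $$ (i, j) / of_nat (fact k)) =
      (\<Sum>a<n. (u a i * cnj (u a j)) * exp (\<mu> a))"
    by (simp add: sums_iff)
  then show "mexp (spectral_mat n u \<mu>) $$ (i, j) = spectral_mat n u (\<lambda>a. exp (\<mu> a)) $$ (i, j)"
    unfolding mexp_def using ij by (simp add: mult_ac)
qed (auto simp: mexp_def)

lemma sum_swap_pair: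
  "(\<Sum>k\<in>K. \<Sum>l\<in>L. \<Sum>a\<in>A. \<Sum>b\<in>B. f k l a b) = (\<Sum>a\<in>A. \<Sum>b\<in>B. \<Sum>k\<in>K. \<Sum>l\<in>L. f k l a b)"
proof -
  have "(\<Sum>k\<in>K. \<Sum>l\<in>L. \<Sum>a\<in>A. \<Sum>b\<in>B. f k l a b) = (\<Sum>a\<in>A. \<Sum>k\<in>K. \<Sum>l\<in>L. \<Sum>b\<in>B. f k l a b)"
    by (subst sum.swap, rule sum.cong[OF refl], subst sum.swap, rule refl)
  also have "\<dots> = (\<Sum>a\<in>A. \<Sum>b\<in>B. \<Sum>k\<in>K. \<Sum>l\<in>L. f k l a b)"
    by (rule sum.cong[OF refl], subst sum.swap, rule sum.cong[OF refl], rule sum.swap)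
  finally show ?thesis .
qed

definition mat_coeff :: "nat \<Rightarrow> (nat \<Rightarrow> nat \<Rightarrow> complex) \<Rightarrow> complex mat \<Rightarrow> nat \<Rightarrow> nat \<Rightarrow> complex" where
  "mat_coeff n u M a b = (\<Sum>k<n. \<Sum>l<n. cnj (u a k) * M $$ (k, l) * u b l)"

lemma index_spectral_mat_mult3:
  assumes M: "M \<in> carrier_mat n n" and ij: "i < n" "j < n"
  shows "(spectral_mat n u \<alpha> * M * spectral_mat n u \<beta>) $$ (i, j) =
    (\<Sum>a<n. \<Sum>b<n. \<alpha> a * \<beta> b * u a i * cnj (u b j) * mat_coeff n u M a b)"
proof -
  have "(spectral_mat n u \<alpha> * M * spectral_mat n u \<beta>) $$ (i, j) =
    (\<Sum>k<n. \<Sum>l<n. spectral_mat n u \<alpha> $$ (i, k) * M $$ (k, l) * spectral_mat n u \<beta> $$ (l, j))"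
    using M ij by (intro index_mult3_mat_sum) auto
  also have "\<dots> = (\<Sum>k<n. \<Sum>l<n. \<Sum>a<n. \<Sum>b<n.
      (\<alpha> a * u a i * cnj (u a k)) * M $$ (k, l) * (\<beta> b * u b l * cnj (u b j)))"
    using ij by (intro sum.cong refl)
      (simp only: index_spectral_mat lessThan_iff sum_distrib_right, simp only: sum_distrib_left)
  also have "\<dots> = (\<Sum>a<n. \<Sum>b<n. \<Sum>k<n. \<Sum>l<n.
      (\<alpha> a * u a i * cnj (u a k)) * M $$ (k, l) * (\<beta> b * u b l * cnj (u b j)))"
    by (rule sum_swap_pair)
  also have "\<dots> = (\<Sum>a<n. \<Sum>b<n. \<alpha> a * \<beta> b * u a i * cnj (u b j) * mat_coeff n u M a b)"
    unfolding mat_coeff_def by (intro sum.cong refl) (simp add: sum_distrib_left mult_ac)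
  finally show ?thesis .
qed

lemma mat_expand_coeff:
  assumes o: "orthonormal n n u" and M: "M \<in> carrier_mat n n" and ij: "i < n" "j < n"
  shows "M $$ (i, j) = (\<Sum>a<n. \<Sum>b<n. u a i * cnj (u b j) * mat_coeff n u M a b)"
  using index_spectral_mat_mult3[OF M ij, of u "\<lambda>a. 1" "\<lambda>a. 1"] M
  by (simp add: spectral_mat_one[OF o])

lemma spectral_mat_apply_basis:
  assumes o: "orthonormal n n u" and m: "m < n" and b: "b < n"
  shows "(\<Sum>l<n. spectral_mat n u \<beta> $$ (m, l) * u b l) = \<beta> b * u b m"
proof -
  have "(\<Sum>l<n. spectral_mat n u \<beta> $$ (m, l) * u b l) = (\<Sum>c<n. \<beta> c * u c m * cinner_on n (u c) (u b))"
    unfolding cinner_on_def using m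
    by (simp add: sum_distrib_left sum_distrib_right mult_ac, subst sum.swap, simp)
  also have "\<dots> = (\<Sum>c<n. if c = b then \<beta> c * u c m else 0)"
    using o b unfolding orthonormal_def by (intro sum.cong refl) auto
  finally show ?thesis using b by simp
qed

lemma basis_apply_spectral_mat:
  assumes o: "orthonormal n n u" and m: "m < n" and a: "a < n"
  shows "(\<Sum>k<n. cnj (u a k) * spectral_mat n u \<alpha> $$ (k, m)) = \<alpha> a * cnj (u a m)"
proof -
  have "(\<Sum>k<n. cnj (u a k) * spectral_mat n u \<alpha> $$ (k, m)) = (\<Sum>c<n. \<alpha> c * cnj (u c m) * cinner_on n (u a) (u c))"
    unfolding cinner_on_def using m
    by (simp add: sum_distrib_left sum_distrib_right mult_ac, subst sum.swap, simp)
  also have "\<dots> = (\<Sum>c<n. if c = a then \<alpha> c * cnj (u c m) else 0)"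
    using o a unfolding orthonormal_def by (intro sum.cong refl) auto
  finally show ?thesis using a by simp
qed

lemma mat_coeff_mult_spectral_mat:
  assumes o: "orthonormal n n u" and M: "M \<in> carrier_mat n n" and ab: "a < n" "b < n"
  shows "mat_coeff n u (M * spectral_mat n u \<beta>) a b = \<beta> b * mat_coeff n u M a b"
proof -
  have "mat_coeff n u (M * spectral_mat n u \<beta>) a b =
      (\<Sum>k<n. \<Sum>l<n. cnj (u a k) * (\<Sum>m<n. M $$ (k, m) * spectral_mat n u \<beta> $$ (m, l)) * u b l)"
    unfolding mat_coeff_def using M
    by (intro sum.cong refl arg_cong2[where f = "(*)"] refl) (subst index_mult_mat_sum, auto)
  also have "\<dots> = (\<Sum>k<n. \<Sum>m<n. cnj (u a k) * M $$ (k, m) * (\<Sum>l<n. spectral_mat n u \<beta> $$ (m, l) * u b l))"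
    by (rule sum.cong[OF refl], simp add: sum_distrib_left sum_distrib_right mult_ac,
        subst sum.swap, simp add: mult_ac)
  also have "\<dots> = (\<Sum>k<n. \<Sum>m<n. cnj (u a k) * M $$ (k, m) * (\<beta> b * u b m))"
    using spectral_mat_apply_basis[OF o _ ab(2)] by (intro sum.cong refl) auto
  also have "\<dots> = \<beta> b * mat_coeff n u M a b"
    unfolding mat_coeff_def by (simp add: sum_distrib_left mult_ac)
  finally show ?thesis .
qed

lemma mat_coeff_spectral_mat_mult:
  assumes o: "orthonormal n n u" and M: "M \<in> carrier_mat n n" and ab: "a < n" "b < n"
  shows "mat_coeff n u (spectral_mat n u \<alpha> * M) a b = \<alpha> a * mat_coeff n u M a b"
proof -
  have "mat_coeff n u (spectral_mat n u \<alpha> * M) a b =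
      (\<Sum>k<n. \<Sum>l<n. cnj (u a k) * (\<Sum>m<n. spectral_mat n u \<alpha> $$ (k, m) * M $$ (m, l)) * u b l)"
    unfolding mat_coeff_def using M
    by (intro sum.cong refl arg_cong2[where f = "(*)"] refl) (subst index_mult_mat_sum, auto)
  also have "\<dots> = (\<Sum>l<n. \<Sum>k<n. \<Sum>m<n. cnj (u a k) * spectral_mat n u \<alpha> $$ (k, m) * M $$ (m, l) * u b l)"
    by (subst sum.swap) (simp add: sum_distrib_left sum_distrib_right mult_ac)
  also have "\<dots> = (\<Sum>l<n. \<Sum>m<n. (\<Sum>k<n. cnj (u a k) * spectral_mat n u \<alpha> $$ (k, m)) * M $$ (m, l) * u b l)"
    by (rule sum.cong[OF refl], simp add: sum_distrib_right, subst sum.swap, simp add: mult_ac)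
  also have "\<dots> = (\<Sum>l<n. \<Sum>m<n. \<alpha> a * cnj (u a m) * M $$ (m, l) * u b l)"
    using basis_apply_spectral_mat[OF o _ ab(1)] by (intro sum.cong refl) auto
  also have "\<dots> = \<alpha> a * mat_coeff n u M a b"
    unfolding mat_coeff_def by (subst sum.swap) (simp add: sum_distrib_left mult_ac)
  finally show ?thesis .
qed

text \<open>The coefficients of \<open>M\<close> between different eigenvalues vanish.\<close>

lemma commute_spectral_mat_fun:
  assumes o: "orthonormal n n u" and M: "M \<in> carrier_mat n n"
    and comm: "M * spectral_mat n u (\<lambda>a. complex_of_real (l a)) = spectral_mat n u (\<lambda>a. complex_of_real (l a)) * M"
  shows "M * spectral_mat n u (\<lambda>a. f (l a)) = spectral_mat n u (\<lambda>a. f (l a)) * M"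
proof (rule eq_matI)
  have coeff: "mat_coeff n u (M * spectral_mat n u (\<lambda>a. f (l a))) a b =
      mat_coeff n u (spectral_mat n u (\<lambda>a. f (l a)) * M) a b" if ab: "a < n" "b < n" for a b
  proof -
    have "complex_of_real (l b) * mat_coeff n u M a b = complex_of_real (l a) * mat_coeff n u M a b"
      using arg_cong[OF comm, of "\<lambda>X. mat_coeff n u X a b"]
      unfolding mat_coeff_mult_spectral_mat[OF o M ab] mat_coeff_spectral_mat_mult[OF o M ab] .
    then have "l a = l b \<or> mat_coeff n u M a b = 0" by auto
    then show ?thesis
      unfolding mat_coeff_mult_spectral_mat[OF o M ab] mat_coeff_spectral_mat_mult[OF o M ab] by auto
  qed
  fix i j assume "i < dim_row (spectral_mat n u (\<lambda>a. f (l a)) * M)"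
    "j < dim_col (spectral_mat n u (\<lambda>a. f (l a)) * M)"
  then have ij: "i < n" "j < n" using M by auto
  show "(M * spectral_mat n u (\<lambda>a. f (l a))) $$ (i, j) = (spectral_mat n u (\<lambda>a. f (l a)) * M) $$ (i, j)"
    using M coeff by (subst (1 2) mat_expand_coeff[OF o _ ij]) auto
qed (use M in auto)

subsection \<open>Kronecker products and partial traces\<close>

lemma dim_kron [simp]:
  "dim_row (kron A B) = dim_row A * dim_row B" "dim_col (kron A B) = dim_col A * dim_col B"
  unfolding kron_def by auto

lemma index_kron:
  assumes "A \<in> carrier_mat n1 m1" "B \<in> carrier_mat n2 m2" "i < n1 * n2" "j < m1 * m2"
  shows "kron A B $$ (i, j) = A $$ (i div n2, j div m2) * B $$ (i mod n2, j mod m2)"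
  using assms unfolding kron_def by simp

lemma index_kron_pair:
  assumes "A \<in> carrier_mat n1 m1" "B \<in> carrier_mat n2 m2" "r < n1" "x < n2" "r' < m1" "x' < m2"
  shows "kron A B $$ (r * n2 + x, r' * m2 + x') = A $$ (r, r') * B $$ (x, x')"
  using assms by (subst index_kron[OF assms(1,2)]) (auto simp: pair_index_less)

lemma kron_mult:
  assumes "A1 \<in> carrier_mat n n" "A2 \<in> carrier_mat n n" "B1 \<in> carrier_mat m m" "B2 \<in> carrier_mat m m"
  shows "kron A1 B1 * kron A2 B2 = kron (A1 * A2) (B1 * B2)"
proof (rule eq_matI)
  fix i j assume "i < dim_row (kron (A1 * A2) (B1 * B2))" "j < dim_col (kron (A1 * A2) (B1 * B2))"
  then have ij: "i < n * m" "j < n * m" using assms by auto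
  note div_mod = div_less_of_less_mult[OF ij(1)] div_less_of_less_mult[OF ij(2)]
    mod_less_of_less_mult[OF ij(1)] mod_less_of_less_mult[OF ij(2)]
  have "(kron A1 B1 * kron A2 B2) $$ (i, j) = (\<Sum>l<n * m. kron A1 B1 $$ (i, l) * kron A2 B2 $$ (l, j))"
    using assms ij by (intro index_mult_mat_sum[of _ _ "n * m"]) auto
  also have "\<dots> = (\<Sum>r<n. \<Sum>s<m. (A1 $$ (i div m, r) * A2 $$ (r, j div m)) *
      (B1 $$ (i mod m, s) * B2 $$ (s, j mod m)))"
    unfolding sum_lessThan_mult using assms ij div_mod
    by (intro sum.cong refl) (auto simp: index_kron[OF assms(1,3)] index_kron[OF assms(2,4)]
        pair_index_less mult_ac)
  also have "\<dots> = (A1 * A2) $$ (i div m, j div m) * (B1 * B2) $$ (i mod m, j mod m)"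
    using div_mod by (simp add: index_mult_mat_sum[OF assms(1,2)] index_mult_mat_sum[OF assms(3,4)] sum_product)
  also have "\<dots> = kron (A1 * A2) (B1 * B2) $$ (i, j)"
    using assms ij by (simp add: index_kron[of _ n n _ m m])
  finally show "(kron A1 B1 * kron A2 B2) $$ (i, j) = kron (A1 * A2) (B1 * B2) $$ (i, j)" .
qed (use assms in auto)

lemma index_kron_mult3:
  assumes A: "A \<in> carrier_mat n n" "A' \<in> carrier_mat n n"
    and B: "B \<in> carrier_mat m m" "B' \<in> carrier_mat m m"
    and M: "M \<in> carrier_mat (n * m) (n * m)"
    and idx: "r < n" "r' < n" "x < m" "y < m"
  shows "(kron A B * M * kron A' B') $$ (r * m + x, r' * m + y) =
    (\<Sum>r1<n. \<Sum>x1<m. \<Sum>r2<n. \<Sum>y2<m.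
       A $$ (r, r1) * B $$ (x, x1) * M $$ (r1 * m + x1, r2 * m + y2) * A' $$ (r2, r') * B' $$ (y2, y))"
proof -
  have "(kron A B * M * kron A' B') $$ (r * m + x, r' * m + y) =
     (\<Sum>p<n * m. \<Sum>q<n * m. kron A B $$ (r * m + x, p) * M $$ (p, q) * kron A' B' $$ (q, r' * m + y))"
    using A B M idx by (intro index_mult3_mat_sum) (auto simp: pair_index_less)
  also have "\<dots> = (\<Sum>r1<n. \<Sum>x1<m. \<Sum>r2<n. \<Sum>y2<m.
       (A $$ (r, r1) * B $$ (x, x1)) * M $$ (r1 * m + x1, r2 * m + y2) * (A' $$ (r2, r') * B' $$ (y2, y)))"
    unfolding sum_lessThan_mult by (intro sum.cong refl) (use A B idx in \<open>simp add: index_kron_pair\<close>)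
  also have "\<dots> = (\<Sum>r1<n. \<Sum>x1<m. \<Sum>r2<n. \<Sum>y2<m.
       A $$ (r, r1) * B $$ (x, x1) * M $$ (r1 * m + x1, r2 * m + y2) * A' $$ (r2, r') * B' $$ (y2, y))"
    by (simp add: mult_ac)
  finally show ?thesis .
qed

lemma sum_swap_inner4:
  "(\<Sum>s\<in>S. \<Sum>a\<in>A. \<Sum>b\<in>B. \<Sum>c\<in>C. \<Sum>d\<in>D. f s a b c d) =
   (\<Sum>a\<in>A. \<Sum>b\<in>B. \<Sum>c\<in>C. \<Sum>d\<in>D. \<Sum>s\<in>S. f s a b c d)"
proof -
  have "(\<Sum>s\<in>S. \<Sum>a\<in>A. \<Sum>b\<in>B. \<Sum>c\<in>C. \<Sum>d\<in>D. f s a b c d) =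
      (\<Sum>a\<in>A. \<Sum>b\<in>B. \<Sum>s\<in>S. \<Sum>c\<in>C. \<Sum>d\<in>D. f s a b c d)"
    by (subst sum.swap, rule sum.cong[OF refl], rule sum.swap)
  also have "\<dots> = (\<Sum>a\<in>A. \<Sum>b\<in>B. \<Sum>c\<in>C. \<Sum>d\<in>D. \<Sum>s\<in>S. f s a b c d)"
    by (intro sum.cong refl, subst sum.swap, rule sum.cong[OF refl], rule sum.swap)
  finally show ?thesis .
qed

lemma index_left_inverse_sum:
  assumes "B' * B = 1\<^sub>m m" "B \<in> carrier_mat m m" "B' \<in> carrier_mat m m" "x < m" "y < m"
  shows "(\<Sum>s<m. B' $$ (y, s) * B $$ (s, x)) = (if y = x then 1 else 0)"
  using arg_cong[OF assms(1), of "\<lambda>M. M $$ (y, x)"] assms index_mult_mat_sum[OF assms(3,2) assms(5,4)]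
  by simp

lemma ptrace_S_kron_conj:
  assumes A: "A \<in> carrier_mat n n" "A' \<in> carrier_mat n n"
    and B: "B \<in> carrier_mat m m" "B' \<in> carrier_mat m m"
    and M: "M \<in> carrier_mat (n * m) (n * m)" and BB: "B' * B = 1\<^sub>m m"
  shows "ptrace_S n m (kron A B * M * kron A' B') = A * ptrace_S n m M * A'"
proof (rule eq_matI)
  have P: "ptrace_S n m M \<in> carrier_mat n n" unfolding ptrace_S_def by simp
  fix a b assume "a < dim_row (A * ptrace_S n m M * A')" "b < dim_col (A * ptrace_S n m M * A')"
  then have ab: "a < n" "b < n" using A by auto
  have "ptrace_S n m (kron A B * M * kron A' B') $$ (a, b) =
      (\<Sum>s<m. \<Sum>r1<n. \<Sum>x1<m. \<Sum>r2<n. \<Sum>y2<m.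
        A $$ (a, r1) * B $$ (s, x1) * M $$ (r1 * m + x1, r2 * m + y2) * A' $$ (r2, b) * B' $$ (y2, s))"
    unfolding ptrace_S_def using ab by (simp add: index_kron_mult3[OF A B M])
  also have "\<dots> = (\<Sum>r1<n. \<Sum>x1<m. \<Sum>r2<n. \<Sum>y2<m. A $$ (a, r1) * M $$ (r1 * m + x1, r2 * m + y2) *
      A' $$ (r2, b) * (\<Sum>s<m. B' $$ (y2, s) * B $$ (s, x1)))"
    by (subst sum_swap_inner4, intro sum.cong refl, simp add: sum_distrib_left mult_ac)
  also have "\<dots> = (\<Sum>r1<n. \<Sum>x1<m. \<Sum>r2<n. \<Sum>y2<m.
      (if y2 = x1 then A $$ (a, r1) * M $$ (r1 * m + x1, r2 * m + y2) * A' $$ (r2, b) else 0))"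
    by (intro sum.cong refl) (simp add: index_left_inverse_sum[OF BB B])
  also have "\<dots> = (\<Sum>r1<n. \<Sum>x1<m. \<Sum>r2<n. A $$ (a, r1) * M $$ (r1 * m + x1, r2 * m + x1) * A' $$ (r2, b))"
    by (intro sum.cong refl) simp
  also have "\<dots> = (\<Sum>r1<n. \<Sum>r2<n. A $$ (a, r1) * ptrace_S n m M $$ (r1, r2) * A' $$ (r2, b))"
    by (intro sum.cong[OF refl], subst sum.swap, intro sum.cong[OF refl])
      (auto simp: ptrace_S_def sum_distrib_left sum_distrib_right)
  also have "\<dots> = (A * ptrace_S n m M * A') $$ (a, b)"
    using ab A P by (intro index_mult3_mat_sum[symmetric]) auto
  finally show "ptrace_S n m (kron A B * M * kron A' B') $$ (a, b) = (A * ptrace_S n m M * A') $$ (a, b)" .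
qed (use A in \<open>auto simp: ptrace_S_def\<close>)

lemma ptrace_R_kron_conj:
  assumes A: "A \<in> carrier_mat n n" "A' \<in> carrier_mat n n"
    and B: "B \<in> carrier_mat m m" "B' \<in> carrier_mat m m"
    and M: "M \<in> carrier_mat (n * m) (n * m)" and AA: "A' * A = 1\<^sub>m n"
  shows "ptrace_R n m (kron A B * M * kron A' B') = B * ptrace_R n m M * B'"
proof (rule eq_matI)
  have P: "ptrace_R n m M \<in> carrier_mat m m" unfolding ptrace_R_def by simp
  fix p q assume "p < dim_row (B * ptrace_R n m M * B')" "q < dim_col (B * ptrace_R n m M * B')"
  then have pq: "p < m" "q < m" using B by auto
  have "ptrace_R n m (kron A B * M * kron A' B') $$ (p, q) =
      (\<Sum>r<n. \<Sum>r1<n. \<Sum>x1<m. \<Sum>r2<n. \<Sum>y2<m.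
        A $$ (r, r1) * B $$ (p, x1) * M $$ (r1 * m + x1, r2 * m + y2) * A' $$ (r2, r) * B' $$ (y2, q))"
    unfolding ptrace_R_def using pq by (simp add: index_kron_mult3[OF A B M])
  also have "\<dots> = (\<Sum>r1<n. \<Sum>x1<m. \<Sum>r2<n. \<Sum>y2<m. B $$ (p, x1) * M $$ (r1 * m + x1, r2 * m + y2) *
      B' $$ (y2, q) * (\<Sum>r<n. A' $$ (r2, r) * A $$ (r, r1)))"
    by (subst sum_swap_inner4, intro sum.cong refl, simp add: sum_distrib_left mult_ac)
  also have "\<dots> = (\<Sum>r1<n. \<Sum>x1<m. \<Sum>y2<m. B $$ (p, x1) * M $$ (r1 * m + x1, r1 * m + y2) * B' $$ (y2, q))"
  proof (rule sum.cong[OF refl], rule sum.cong[OF refl])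
    fix r1 x1 assume r1: "r1 \<in> {..<n}"
    have "(\<Sum>r2<n. \<Sum>y2<m. B $$ (p, x1) * M $$ (r1 * m + x1, r2 * m + y2) * B' $$ (y2, q) *
        (\<Sum>r<n. A' $$ (r2, r) * A $$ (r, r1))) =
      (\<Sum>r2<n. if r2 = r1 then \<Sum>y2<m. B $$ (p, x1) * M $$ (r1 * m + x1, r2 * m + y2) * B' $$ (y2, q) else 0)"
      using r1 by (intro sum.cong refl) (simp add: index_left_inverse_sum[OF AA A])
    then show "(\<Sum>r2<n. \<Sum>y2<m. B $$ (p, x1) * M $$ (r1 * m + x1, r2 * m + y2) * B' $$ (y2, q) *
        (\<Sum>r<n. A' $$ (r2, r) * A $$ (r, r1))) =
      (\<Sum>y2<m. B $$ (p, x1) * M $$ (r1 * m + x1, r1 * m + y2) * B' $$ (y2, q))"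
      using r1 by simp
  qed
  also have "\<dots> = (\<Sum>x1<m. \<Sum>y2<m. B $$ (p, x1) * ptrace_R n m M $$ (x1, y2) * B' $$ (y2, q))"
    by (subst sum.swap, intro sum.cong[OF refl], subst sum.swap)
      (auto simp: ptrace_R_def sum_distrib_left sum_distrib_right)
  also have "\<dots> = (B * ptrace_R n m M * B') $$ (p, q)"
    using pq B P by (intro index_mult3_mat_sum[symmetric]) auto
  finally show "ptrace_R n m (kron A B * M * kron A' B') $$ (p, q) = (B * ptrace_R n m M * B') $$ (p, q)" .
qed (use B in \<open>auto simp: ptrace_R_def\<close>)

definition kron_basis :: "nat \<Rightarrow> (nat \<Rightarrow> nat \<Rightarrow> complex) \<Rightarrow> (nat \<Rightarrow> nat \<Rightarrow> complex) \<Rightarrow> nat \<Rightarrow> nat \<Rightarrow> complex" where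
  "kron_basis m u v a i = u (a div m) (i div m) * v (a mod m) (i mod m)"

lemma orthonormal_kron_basis:
  assumes u: "orthonormal n n u" and v: "orthonormal m m v"
  shows "orthonormal (n * m) (n * m) (kron_basis m u v)"
  unfolding orthonormal_def
proof (intro allI impI)
  fix a b assume ab: "a < n * m" "b < n * m"
  have "cinner_on (n * m) (kron_basis m u v a) (kron_basis m u v b) =
      cinner_on n (u (a div m)) (u (b div m)) * cinner_on m (v (a mod m)) (v (b mod m))"
    unfolding cinner_on_def sum_product kron_basis_def sum_lessThan_mult
    by (intro sum.cong refl) (auto simp: mult_ac)
  also have "\<dots> = (if a div m = b div m \<and> a mod m = b mod m then 1 else 0)"
    using u v ab unfolding orthonormal_def by (simp add: div_less_of_less_mult mod_less_of_less_mult)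
  also have "\<dots> = (if a = b then 1 else 0)"
    by (metis div_mult_mod_eq)
  finally show "cinner_on (n * m) (kron_basis m u v a) (kron_basis m u v b) = (if a = b then 1 else 0)" .
qed

lemma kron_spectral_mat:
  "kron (spectral_mat n u \<alpha>) (spectral_mat m v \<beta>) =
    spectral_mat (n * m) (kron_basis m u v) (\<lambda>a. \<alpha> (a div m) * \<beta> (a mod m))"
proof (rule eq_matI)
  fix i j assume "i < dim_row (spectral_mat (n * m) (kron_basis m u v) (\<lambda>a. \<alpha> (a div m) * \<beta> (a mod m)))"
    "j < dim_col (spectral_mat (n * m) (kron_basis m u v) (\<lambda>a. \<alpha> (a div m) * \<beta> (a mod m)))"
  then have ij: "i < n * m" "j < n * m" by auto
  have "kron (spectral_mat n u \<alpha>) (spectral_mat m v \<beta>) $$ (i, j) =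
      spectral_mat n u \<alpha> $$ (i div m, j div m) * spectral_mat m v \<beta> $$ (i mod m, j mod m)"
    using ij by (intro index_kron) auto
  also have "\<dots> = (\<Sum>r<n. \<Sum>s<m. (\<alpha> r * u r (i div m) * cnj (u r (j div m))) *
      (\<beta> s * v s (i mod m) * cnj (v s (j mod m))))"
    using ij by (simp add: div_less_of_less_mult mod_less_of_less_mult sum_product)
  also have "\<dots> = spectral_mat (n * m) (kron_basis m u v) (\<lambda>a. \<alpha> (a div m) * \<beta> (a mod m)) $$ (i, j)"
    using ij unfolding index_spectral_mat[OF ij] kron_basis_def sum_lessThan_mult
    by (intro sum.cong refl) (auto simp: mult_ac)
  finally show "kron (spectral_mat n u \<alpha>) (spectral_mat m v \<beta>) $$ (i, j) =
    spectral_mat (n * m) (kron_basis m u v) (\<lambda>a. \<alpha> (a div m) * \<beta> (a mod m)) $$ (i, j)" .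
qed auto

subsection \<open>Long-time averages\<close>

definition has_time_average :: "(real \<Rightarrow> complex) \<Rightarrow> complex \<Rightarrow> bool" where
  "has_time_average g L \<longleftrightarrow>
    (\<forall>T. g integrable_on {0..T}) \<and> ((\<lambda>T. (1 / T) *\<^sub>R integral {0..T} g) \<longlongrightarrow> L) at_top"

lemma has_time_average_unique: "has_time_average g L \<Longrightarrow> has_time_average g L' \<Longrightarrow> L = L'"
  unfolding has_time_average_def by (meson tendsto_unique trivial_limit_at_top_linorder)

lemma has_time_average_cong:
  "has_time_average f L \<Longrightarrow> (\<And>t. f t = g t) \<Longrightarrow> L = M \<Longrightarrow> has_time_average g M"
  by (metis ext)

lemma has_time_average_const: "has_time_average (\<lambda>t. c) c"
  unfolding has_time_average_def
proof (intro conjI allI)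
  show "(\<lambda>t. c) integrable_on {0..T}" for T :: real by (rule integrable_const_ivl)
  have "\<forall>\<^sub>F T in at_top. c = (1 / T) *\<^sub>R integral {0..T} (\<lambda>t. c)"
    using eventually_gt_at_top[of "0::real"] by eventually_elim simp
  then show "((\<lambda>T. (1 / T) *\<^sub>R integral {0..T} (\<lambda>t. c)) \<longlongrightarrow> c) at_top"
    by (rule Lim_transform_eventually[OF tendsto_const])
qed

lemma has_time_average_add:
  assumes "has_time_average f L" "has_time_average g M"
  shows "has_time_average (\<lambda>t. f t + g t) (L + M)"
  unfolding has_time_average_def
proof (intro conjI allI)
  show "(\<lambda>t. f t + g t) integrable_on {0..T}" for T
    using assms unfolding has_time_average_def by (intro integrable_add) auto
  have "((\<lambda>T. (1 / T) *\<^sub>R integral {0..T} f + (1 / T) *\<^sub>R integral {0..T} g) \<longlongrightarrow> L + M) at_top"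
    using assms unfolding has_time_average_def by (intro tendsto_add) auto
  moreover have "(1 / T) *\<^sub>R integral {0..T} (\<lambda>t. f t + g t) =
      (1 / T) *\<^sub>R integral {0..T} f + (1 / T) *\<^sub>R integral {0..T} g" for T
    using assms unfolding has_time_average_def by (simp add: integral_add scaleR_add_right)
  ultimately show "((\<lambda>T. (1 / T) *\<^sub>R integral {0..T} (\<lambda>t. f t + g t)) \<longlongrightarrow> L + M) at_top" by simp
qed

lemma has_time_average_cmult:
  assumes "has_time_average f L"
  shows "has_time_average (\<lambda>t. c * f t) (c * L)"
  unfolding has_time_average_def
proof (intro conjI allI)
  show "(\<lambda>t. c * f t) integrable_on {0..T}" for T
    using assms unfolding has_time_average_def by (intro integrable_on_mult_right) auto
  have "((\<lambda>T. c * ((1 / T) *\<^sub>R integral {0..T} f)) \<longlongrightarrow> c * L) at_top"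
    using assms unfolding has_time_average_def by (intro tendsto_mult tendsto_const) auto
  moreover have "(1 / T) *\<^sub>R integral {0..T} (\<lambda>t. c * f t) = c * ((1 / T) *\<^sub>R integral {0..T} f)" for T
    by (simp add: integral_mult_right)
  ultimately show "((\<lambda>T. (1 / T) *\<^sub>R integral {0..T} (\<lambda>t. c * f t)) \<longlongrightarrow> c * L) at_top" by simp
qed

lemma has_time_average_sum:
  "finite S \<Longrightarrow> (\<And>k. k \<in> S \<Longrightarrow> has_time_average (f k) (L k)) \<Longrightarrow>
    has_time_average (\<lambda>t. \<Sum>k\<in>S. f k t) (\<Sum>k\<in>S. L k)"
  by (induction S rule: finite_induct) (auto intro: has_time_average_add has_time_average_const)

text \<open>Only the zero frequency survives averaging: an antiderivative of a nonzero
  frequency is bounded, so its average decays like \<open>1 / T\<close>.\<close>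

lemma has_time_average_exp:
  "has_time_average (\<lambda>t. K * exp (\<i> * complex_of_real ((t + s) * \<omega>))) (if \<omega> = 0 then K else 0)"
proof (cases "\<omega> = 0")
  case True
  then show ?thesis by (intro has_time_average_cong[OF has_time_average_const]) auto
next
  case False
  define g where "g t = K * exp (\<i> * complex_of_real ((t + s) * \<omega>))" for t
  define F where "F t = K * exp (\<i> * complex_of_real ((t + s) * \<omega>)) / (\<i> * complex_of_real \<omega>)" for t
  have F_deriv: "(F has_vector_derivative g t) (at t within X)" for t X
  proof -
    have "((\<lambda>z. K * exp (\<i> * ((z + complex_of_real s) * complex_of_real \<omega>)) / (\<i> * complex_of_real \<omega>))
        has_field_derivative K * exp (\<i> * ((z + complex_of_real s) * complex_of_real \<omega>))) (at z)" for z
      using False by (auto intro!: derivative_eq_intros simp: field_simps)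
    from has_vector_derivative_real_field[OF this, of t X] show ?thesis
      unfolding F_def g_def by simp
  qed
  have int: "g integrable_on {0..T}" for T
    unfolding g_def by (intro integrable_continuous_interval continuous_intros)
  have norm_F: "norm (F t) = norm K / \<bar>\<omega>\<bar>" for t
    unfolding F_def by (simp add: norm_mult norm_divide norm_exp_eq_Re)
  have "((\<lambda>T. (1 / T) *\<^sub>R integral {0..T} g) \<longlongrightarrow> 0) at_top"
  proof (rule Lim_null_comparison)
    show "\<forall>\<^sub>F T in at_top. norm ((1 / T) *\<^sub>R integral {0..T} g) \<le> (2 * norm K / \<bar>\<omega>\<bar>) / T"
      using eventually_gt_at_top[of "0::real"]
    proof eventually_elim
      case (elim T)
      have "integral {0..T} g = F T - F 0"
        using elim by (intro integral_unique fundamental_theorem_of_calculus F_deriv) auto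
      then have "norm ((1 / T) *\<^sub>R integral {0..T} g) = norm (F T - F 0) / T"
        using elim by simp
      also have "\<dots> \<le> (2 * norm K / \<bar>\<omega>\<bar>) / T"
        using norm_triangle_ineq4[of "F T" "F 0"] elim unfolding norm_F by (intro divide_right_mono) auto
      finally show ?case .
    qed
    show "((\<lambda>T. 2 * norm K / \<bar>\<omega>\<bar> / T) \<longlongrightarrow> 0) at_top"
      by (intro tendsto_divide_0[OF tendsto_const] filterlim_at_top_imp_at_infinity filterlim_ident)
  qed
  then show ?thesis using False int unfolding has_time_average_def g_def by simp
qed

lemma has_time_average_nonneg:
  assumes "has_time_average g L" "\<And>t. Im (g t) = 0" "\<And>t. Re (g t) \<ge> 0"
  shows "Im L = 0 \<and> Re L \<ge> 0"
proof -
  define C where "C = {z :: complex. Im z = 0 \<and> 0 \<le> Re z}"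
  have "closed C" unfolding C_def
    by (intro closed_Collect_conj closed_Collect_eq closed_Collect_le continuous_intros)
  have int: "g integrable_on {0..T}" for T using assms(1) unfolding has_time_average_def by auto
  have "\<forall>\<^sub>F T in at_top. (1 / T) *\<^sub>R integral {0..T} g \<in> C"
    using eventually_gt_at_top[of "0::real"]
  proof eventually_elim
    case (elim T)
    have "Im (integral {0..T} g) = integral {0..T} (\<lambda>t. Im (g t))"
      using integral_linear[OF int bounded_linear_Im] by (simp add: o_def)
    moreover have "Re (integral {0..T} g) = integral {0..T} (\<lambda>t. Re (g t))"
      using integral_linear[OF int bounded_linear_Re] by (simp add: o_def)
    moreover have "integral {0..T} (\<lambda>t. Re (g t)) \<ge> 0"
      using integrable_linear[OF int bounded_linear_Re] assms(3) by (intro integral_nonneg) (auto simp: o_def)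
    ultimately show ?case unfolding C_def using elim assms(2) by simp
  qed
  then have "L \<in> C" using assms(1) unfolding has_time_average_def
    by (intro Lim_in_closed_set[OF \<open>closed C\<close>]) auto
  then show ?thesis unfolding C_def by simp
qed

subsection \<open>Block matrices and complete positivity\<close>

definition bdiag :: "nat \<Rightarrow> nat \<Rightarrow> complex mat \<Rightarrow> complex mat" where
  "bdiag k N A = mat (k * N) (k * N) (\<lambda>(i, j). if i div N = j div N then A $$ (i mod N, j mod N) else 0)"

definition blk :: "nat \<Rightarrow> complex mat \<Rightarrow> nat \<Rightarrow> nat \<Rightarrow> complex mat" where
  "blk N M I J = mat N N (\<lambda>(p, q). M $$ (I * N + p, J * N + q))"

lemma bdiag_carrier [simp]: "bdiag k N A \<in> carrier_mat (k * N) (k * N)"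
  unfolding bdiag_def by simp

lemma blk_carrier [simp]: "blk N M I J \<in> carrier_mat N N"
  unfolding blk_def by simp

lemma sum_nested_single_outer:
  assumes "(I::nat) < k" "\<And>r s. r \<noteq> I \<Longrightarrow> f r s = 0"
  shows "(\<Sum>r<k. \<Sum>s\<in>S. f r s) = (\<Sum>s\<in>S. f I s)"
proof -
  have "(\<Sum>r<k. \<Sum>s\<in>S. f r s) = (\<Sum>r<k. if r = I then (\<Sum>s\<in>S. f I s) else 0)"
    using assms(2) by (intro sum.cong refl) auto
  also have "\<dots> = (\<Sum>s\<in>S. f I s)" using assms(1) by (subst sum.delta) auto
  finally show ?thesis .
qed

lemma index_bdiag_mult3:
  assumes A: "A \<in> carrier_mat N N" and B: "B \<in> carrier_mat N N"
    and M: "M \<in> carrier_mat (k * N) (k * N)" and ij: "i < k * N" "j < k * N"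
  shows "(bdiag k N A * M * bdiag k N B) $$ (i, j) =
    (A * blk N M (i div N) (j div N) * B) $$ (i mod N, j mod N)"
proof -
  have iN: "i div N < k" "i mod N < N" "j div N < k" "j mod N < N"
    using ij by (auto simp: div_less_of_less_mult mod_less_of_less_mult)
  have "(bdiag k N A * M * bdiag k N B) $$ (i, j) =
      (\<Sum>p<k * N. \<Sum>q<k * N. bdiag k N A $$ (i, p) * M $$ (p, q) * bdiag k N B $$ (q, j))"
    using M ij by (intro index_mult3_mat_sum) auto
  also have "\<dots> = (\<Sum>r1<k. \<Sum>x<N. \<Sum>r2<k. \<Sum>y<N. (if i div N = r1 then (if j div N = r2 then
      A $$ (i mod N, x) * M $$ (r1 * N + x, r2 * N + y) * B $$ (y, j mod N) else 0) else 0))"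
    unfolding sum_lessThan_mult by (intro sum.cong refl) (use ij in \<open>auto simp: bdiag_def pair_index_less\<close>)
  also have "\<dots> = (\<Sum>x<N. \<Sum>r2<k. \<Sum>y<N. (if j div N = r2 then
      A $$ (i mod N, x) * M $$ (i div N * N + x, r2 * N + y) * B $$ (y, j mod N) else 0))"
    by (subst sum_nested_single_outer[OF iN(1)]) auto
  also have "\<dots> = (\<Sum>x<N. \<Sum>y<N. A $$ (i mod N, x) * M $$ (i div N * N + x, j div N * N + y) * B $$ (y, j mod N))"
    by (rule sum.cong[OF refl], subst sum_nested_single_outer[OF iN(3)]) auto
  also have "\<dots> = (A * blk N M (i div N) (j div N) * B) $$ (i mod N, j mod N)"
    using A B iN by (subst index_mult3_mat_sum[of _ N]) (auto simp: blk_def)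
  finally show ?thesis .
qed

lemma index_id_tensor:
  assumes "i < k * N" "j < k * N"
  shows "id_tensor k N E M $$ (i, j) = E (blk N M (i div N) (j div N)) $$ (i mod N, j mod N)"
  using assms unfolding id_tensor_def blk_def by simp

lemma blk_id_tensor:
  assumes "I < k" "J < k" "E (blk N M I J) \<in> carrier_mat N N"
  shows "blk N (id_tensor k N E M) I J = E (blk N M I J)"
  using assms by (intro eq_matI) (auto simp: blk_def index_id_tensor pair_index_less)

lemma blk_bdiag_mult3:
  assumes A: "A \<in> carrier_mat N N" and B: "B \<in> carrier_mat N N"
    and M: "M \<in> carrier_mat (k * N) (k * N)" and IJ: "I < k" "J < k"
  shows "blk N (bdiag k N A * M * bdiag k N B) I J = A * blk N M I J * B"
proof (rule eq_matI)
  fix p q assume "p < dim_row (A * blk N M I J * B)" "q < dim_col (A * blk N M I J * B)"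
  then have pq: "p < N" "q < N" using A B by auto
  show "blk N (bdiag k N A * M * bdiag k N B) I J $$ (p, q) = (A * blk N M I J * B) $$ (p, q)"
    using index_bdiag_mult3[OF A B M pair_index_less[OF IJ(1) pq(1)] pair_index_less[OF IJ(2) pq(2)]] pq
    unfolding blk_def by simp
qed (use A B in \<open>auto simp: blk_def\<close>)

lemma index_madj: "A \<in> carrier_mat n m \<Longrightarrow> i < m \<Longrightarrow> j < n \<Longrightarrow> madj A $$ (i, j) = cnj (A $$ (j, i))"
  unfolding madj_def by auto

lemma madj_carrier [simp]: "A \<in> carrier_mat n m \<Longrightarrow> madj A \<in> carrier_mat m n"
  unfolding madj_def by auto

lemma madj_bdiag: "A \<in> carrier_mat N N \<Longrightarrow> madj (bdiag k N A) = bdiag k N (madj A)"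
  by (intro eq_matI) (auto simp: madj_def bdiag_def mod_less_of_less_mult)

lemma psd_conj:
  assumes P: "psd n M" and A: "A \<in> carrier_mat n n"
  shows "psd n (A * M * madj A)"
  unfolding psd_def Let_def
proof (intro conjI allI)
  have M: "M \<in> carrier_mat n n" using P unfolding psd_def by auto
  then show "A * M * madj A \<in> carrier_mat n n" using A by (intro mult_carrier_mat[of _ n n]) auto
  fix v :: "nat \<Rightarrow> complex"
  define w where "w q = (\<Sum>j<n. cnj (A $$ (j, q)) * v j)" for q
  have "(\<Sum>i<n. \<Sum>j<n. cnj (v i) * (A * M * madj A) $$ (i, j) * v j) =
      (\<Sum>i<n. \<Sum>j<n. \<Sum>p<n. \<Sum>q<n. cnj (v i) * (A $$ (i, p) * M $$ (p, q) * cnj (A $$ (j, q))) * v j)"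
    using A M
    by (intro sum.cong refl) (simp add: index_mult3_mat_sum[of _ n] index_madj sum_distrib_left sum_distrib_right)
  also have "\<dots> = (\<Sum>p<n. \<Sum>q<n. \<Sum>i<n. \<Sum>j<n. cnj (v i) * (A $$ (i, p) * M $$ (p, q) * cnj (A $$ (j, q))) * v j)"
    by (rule sum_swap_pair)
  also have "\<dots> = (\<Sum>p<n. \<Sum>q<n. cnj (w p) * M $$ (p, q) * w q)"
  proof (rule sum.cong[OF refl], rule sum.cong[OF refl])
    fix p q
    have "cnj (w p) * M $$ (p, q) * w q =
        (\<Sum>i<n. cnj (v i) * A $$ (i, p) * M $$ (p, q)) * (\<Sum>j<n. cnj (A $$ (j, q)) * v j)"
      unfolding w_def cnj_sum by (simp add: sum_distrib_left sum_distrib_right mult_ac)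
    also have "\<dots> = (\<Sum>i<n. \<Sum>j<n. cnj (v i) * (A $$ (i, p) * M $$ (p, q) * cnj (A $$ (j, q))) * v j)"
      unfolding sum_product by (simp add: mult_ac)
    finally show "(\<Sum>i<n. \<Sum>j<n. cnj (v i) * (A $$ (i, p) * M $$ (p, q) * cnj (A $$ (j, q))) * v j) =
        cnj (w p) * M $$ (p, q) * w q" by simp
  qed
  finally show "Im (\<Sum>i<n. \<Sum>j<n. cnj (v i) * (A * M * madj A) $$ (i, j) * v j) = 0"
    "Re (\<Sum>i<n. \<Sum>j<n. cnj (v i) * (A * M * madj A) $$ (i, j) * v j) \<ge> 0"
    using P unfolding psd_def Let_def by auto
qed

lemma channelD:
  assumes "channel N E"
  shows "\<And>X. X \<in> carrier_mat N N \<Longrightarrow> E X \<in> carrier_mat N N"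
    "\<And>X Y. X \<in> carrier_mat N N \<Longrightarrow> Y \<in> carrier_mat N N \<Longrightarrow> E (X + Y) = E X + E Y"
    "\<And>X c. X \<in> carrier_mat N N \<Longrightarrow> E (c \<cdot>\<^sub>m X) = c \<cdot>\<^sub>m E X"
    "\<And>X. X \<in> carrier_mat N N \<Longrightarrow> mtrace (E X) = mtrace X"
    "\<And>k X. psd (k * N) X \<Longrightarrow> psd (k * N) (id_tensor k N E X)"
  using assms unfolding channel_def by auto

lemma psd_id_tensor_conj:
  assumes E: "channel N E" and U: "U \<in> carrier_mat N N" and V: "V \<in> carrier_mat N N"
    and P: "psd (k * N) X"
  shows "psd (k * N) (id_tensor k N (\<lambda>Y. V * E (U * Y * madj U) * madj V) X)"
proof -
  have X: "X \<in> carrier_mat (k * N) (k * N)" using P unfolding psd_def by auto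
  define Y where "Y = id_tensor k N E (bdiag k N U * X * madj (bdiag k N U))"
  have pY: "psd (k * N) Y"
    unfolding Y_def by (intro channelD(5)[OF E] psd_conj[OF P]) simp
  then have Y: "Y \<in> carrier_mat (k * N) (k * N)" unfolding psd_def by auto
  have "id_tensor k N (\<lambda>Y. V * E (U * Y * madj U) * madj V) X = bdiag k N V * Y * madj (bdiag k N V)"
  proof (rule eq_matI)
    fix i j assume "i < dim_row (bdiag k N V * Y * madj (bdiag k N V))"
      "j < dim_col (bdiag k N V * Y * madj (bdiag k N V))"
    then have ij: "i < k * N" "j < k * N" by (auto simp: madj_def bdiag_def)
    have IJ: "i div N < k" "j div N < k" using ij by (auto simp: div_less_of_less_mult)
    have "U * blk N X (i div N) (j div N) * madj U =
        blk N (bdiag k N U * X * madj (bdiag k N U)) (i div N) (j div N)"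
      unfolding madj_bdiag[OF U] by (rule blk_bdiag_mult3[symmetric, OF U madj_carrier[OF U] X IJ])
    also have "E \<dots> = blk N Y (i div N) (j div N)"
      unfolding Y_def using channelD(1)[OF E] by (intro blk_id_tensor[symmetric] IJ) auto
    finally show "id_tensor k N (\<lambda>Y. V * E (U * Y * madj U) * madj V) X $$ (i, j) =
        (bdiag k N V * Y * madj (bdiag k N V)) $$ (i, j)"
      using ij unfolding madj_bdiag[OF V]
      by (simp add: index_id_tensor index_bdiag_mult3[OF V madj_carrier[OF V] Y ij])
  qed (auto simp: id_tensor_def madj_def bdiag_def)
  with psd_conj[OF pY bdiag_carrier] show ?thesis by simp
qed

lemma mtrace_mult_commute:
  assumes "A \<in> carrier_mat n m" "B \<in> carrier_mat m n"
  shows "mtrace (A * B) = mtrace (B * A)"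
proof -
  have "mtrace (A * B) = (\<Sum>i<n. \<Sum>k<m. A $$ (i, k) * B $$ (k, i))"
    unfolding mtrace_def using assms
    by (intro sum.cong) (auto simp del: index_mult_mat(1) simp: index_mult_mat_sum[OF assms(1,2)])
  also have "\<dots> = (\<Sum>k<m. \<Sum>i<n. B $$ (k, i) * A $$ (i, k))"
    by (subst sum.swap) (simp add: mult.commute)
  also have "\<dots> = mtrace (B * A)"
    unfolding mtrace_def using assms
    by (intro sum.cong) (auto simp del: index_mult_mat(1) simp: index_mult_mat_sum[OF assms(2,1)])
  finally show ?thesis .
qed

lemma linear_map_mat_sum:
  fixes E :: "complex mat \<Rightarrow> complex mat"
  assumes Ec: "\<And>X. X \<in> carrier_mat N N \<Longrightarrow> E X \<in> carrier_mat N N"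
    and Ea: "\<And>X Y. X \<in> carrier_mat N N \<Longrightarrow> Y \<in> carrier_mat N N \<Longrightarrow> E (X + Y) = E X + E Y"
    and Es: "\<And>X c. X \<in> carrier_mat N N \<Longrightarrow> E (c \<cdot>\<^sub>m X) = c \<cdot>\<^sub>m E X"
    and S: "finite S" and B: "\<And>s. s \<in> S \<Longrightarrow> B s \<in> carrier_mat N N" and pq: "p < N" "q < N"
  shows "E (mat N N (\<lambda>(i, j). \<Sum>s\<in>S. \<gamma> s * B s $$ (i, j))) $$ (p, q) = (\<Sum>s\<in>S. \<gamma> s * E (B s) $$ (p, q))"
  using S B
proof (induction S rule: finite_induct)
  case empty
  have z: "mat N N (\<lambda>(i, j). \<Sum>s\<in>{}. \<gamma> s * B s $$ (i, j)) = 0\<^sub>m N N"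
    by (rule eq_matI) auto
  have "E (0\<^sub>m N N) = E (0 \<cdot>\<^sub>m 0\<^sub>m N N)" by simp
  also have "\<dots> = 0 \<cdot>\<^sub>m E (0\<^sub>m N N)" by (rule Es) simp
  finally have "E (0\<^sub>m N N) $$ (p, q) = (0 \<cdot>\<^sub>m E (0\<^sub>m N N)) $$ (p, q)" by (rule arg_cong)
  also have "\<dots> = 0" using Ec[of "0\<^sub>m N N"] pq by simp
  finally show ?case unfolding z by simp
next
  case (insert x F)
  define MF where "MF = mat N N (\<lambda>(i, j). \<Sum>s\<in>F. \<gamma> s * B s $$ (i, j))"
  have Bx: "B x \<in> carrier_mat N N" and MF: "MF \<in> carrier_mat N N"
    using insert unfolding MF_def by auto
  have eq: "mat N N (\<lambda>(i, j). \<Sum>s\<in>insert x F. \<gamma> s * B s $$ (i, j)) = \<gamma> x \<cdot>\<^sub>m B x + MF"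
    unfolding MF_def using insert by (intro eq_matI) (auto simp: carrier_matD[OF Bx])
  have "E (\<gamma> x \<cdot>\<^sub>m B x + MF) = \<gamma> x \<cdot>\<^sub>m E (B x) + E MF"
    using Ea Es Bx MF by simp
  moreover have "E MF $$ (p, q) = (\<Sum>s\<in>F. \<gamma> s * E (B s) $$ (p, q))"
    using insert unfolding MF_def by (simp add: case_prod_beta')
  ultimately show ?case unfolding eq using insert Ec[OF Bx] Ec[OF MF] pq by simp
qed

lemma mat_coeff_sum:
  assumes "\<And>k l. k < n \<Longrightarrow> l < n \<Longrightarrow> M $$ (k, l) = (\<Sum>s\<in>S. \<gamma> s * B s $$ (k, l))"
  shows "mat_coeff n u M a b = (\<Sum>s\<in>S. \<gamma> s * mat_coeff n u (B s) a b)"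
proof -
  have "mat_coeff n u M a b = (\<Sum>k<n. \<Sum>l<n. \<Sum>s\<in>S. cnj (u a k) * (\<gamma> s * B s $$ (k, l)) * u b l)"
    unfolding mat_coeff_def using assms by (intro sum.cong refl) (simp add: sum_distrib_left sum_distrib_right)
  also have "\<dots> = (\<Sum>s\<in>S. \<Sum>k<n. \<Sum>l<n. cnj (u a k) * (\<gamma> s * B s $$ (k, l)) * u b l)"
    by (subst sum.swap, rule sum.cong[OF refl], rule sum.swap)
  also have "\<dots> = (\<Sum>s\<in>S. \<gamma> s * mat_coeff n u (B s) a b)"
    unfolding mat_coeff_def by (simp add: sum_distrib_left mult_ac)
  finally show ?thesis .
qed

lemma assoc_mult_mat_conj:
  assumes "A \<in> carrier_mat n n" "B \<in> carrier_mat n n" "C \<in> carrier_mat n n" "D \<in> carrier_mat n n"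
    "E \<in> carrier_mat n n"
  shows "A * (B * C * D) * E = (A * B) * C * (D * E)"
  using assms by (simp add: assoc_mult_mat[of _ n n _ n _ n] mult_carrier_mat[of _ n n _ n])

subsection \<open>Averaging a channel over a unitary flow\<close>

locale unitary_flow =
  fixes N :: nat and w :: "nat \<Rightarrow> nat \<Rightarrow> complex" and \<mu> :: "nat \<Rightarrow> real"
  assumes orthonormal_basis: "orthonormal N N w"
begin

definition phase :: "real \<Rightarrow> nat \<Rightarrow> complex" where
  "phase t a = exp (- (\<i> * complex_of_real t) * complex_of_real (\<mu> a))"

definition U :: "real \<Rightarrow> complex mat" where
  "U t = spectral_mat N w (phase t)"

definition flow :: "real \<Rightarrow> complex mat \<Rightarrow> complex mat" where
  "flow t X = U t * X * U (- t)"

lemma U_carrier [simp]: "U t \<in> carrier_mat N N"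
  unfolding U_def by simp

lemma U_add: "U s * U t = U (s + t)"
  unfolding U_def phase_def spectral_mat_mult[OF orthonormal_basis]
  by (simp add: exp_add[symmetric] algebra_simps)

lemma U_0: "U 0 = 1\<^sub>m N"
  unfolding U_def phase_def using spectral_mat_one[OF orthonormal_basis] by simp

lemma madj_U: "madj (U t) = U (- t)"
  unfolding U_def phase_def madj_spectral_mat by (simp add: exp_cnj)

lemma flow_carrier [simp]: "X \<in> carrier_mat N N \<Longrightarrow> flow t X \<in> carrier_mat N N"
  unfolding flow_def by (intro mult_carrier_mat[of _ N N _ N]) auto

lemma flow_flow: "X \<in> carrier_mat N N \<Longrightarrow> flow s (flow t X) = flow (s + t) X"
  unfolding flow_def by (simp add: assoc_mult_mat_conj[of _ N] U_add add.commute)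

lemma flow_0: "X \<in> carrier_mat N N \<Longrightarrow> flow 0 X = X"
  unfolding flow_def by (simp add: U_0)

lemma flow_add:
  assumes "X \<in> carrier_mat N N" "Y \<in> carrier_mat N N"
  shows "flow t (X + Y) = flow t X + flow t Y"
  unfolding flow_def using assms
  by (simp add: mult_add_distrib_mat[OF U_carrier assms]
      add_mult_distrib_mat[OF mult_carrier_mat[OF U_carrier assms(1)] mult_carrier_mat[OF U_carrier assms(2)] U_carrier])

lemma flow_smult:
  assumes "X \<in> carrier_mat N N"
  shows "flow t (c \<cdot>\<^sub>m X) = c \<cdot>\<^sub>m flow t X"
  unfolding flow_def using assms
  by (simp add: mult_smult_distrib[OF U_carrier assms] mult_smult_assoc_mat[OF mult_carrier_mat[OF U_carrier assms] U_carrier])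

lemma mtrace_flow:
  assumes X: "X \<in> carrier_mat N N"
  shows "mtrace (flow t X) = mtrace X"
proof -
  have "mtrace (flow t X) = mtrace (U (- t) * (U t * X))"
    unfolding flow_def using X by (intro mtrace_mult_commute[of _ N N] mult_carrier_mat[of _ N N]) auto
  also have "\<dots> = mtrace X"
    using X by (simp add: assoc_mult_mat[OF U_carrier U_carrier X, symmetric] U_add U_0)
  finally show ?thesis .
qed

lemma psd_id_tensor_flow:
  assumes "channel N E" "psd (k * N) X"
  shows "psd (k * N) (id_tensor k N (\<lambda>Y. flow (- t) (E (flow t Y))) X)"
  using psd_id_tensor_conj[OF assms(1) U_carrier U_carrier assms(2), of "- t" t]
  unfolding flow_def madj_U by simp

lemma mexp_hamiltonian:
  "mexp (c \<cdot>\<^sub>m spectral_mat N w (\<lambda>a. complex_of_real (\<mu> a))) = spectral_mat N w (\<lambda>a. exp (c * \<mu> a))"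
  unfolding smult_spectral_mat mexp_spectral_mat[OF orthonormal_basis] ..

lemma evol_eq_flow: "evol (spectral_mat N w (\<lambda>a. complex_of_real (\<mu> a))) t A = flow t A"
  unfolding evol_def flow_def U_def phase_def mexp_hamiltonian by simp

lemma flow_fixed:
  assumes X: "X \<in> carrier_mat N N"
    and comm: "X * spectral_mat N w (\<lambda>a. complex_of_real (\<mu> a)) = spectral_mat N w (\<lambda>a. complex_of_real (\<mu> a)) * X"
  shows "flow t X = X"
proof -
  have "X * U s = U s * X" for s
    unfolding U_def phase_def by (rule commute_spectral_mat_fun[OF orthonormal_basis X comm])
  then have "flow t X = X * U t * U (- t)" unfolding flow_def by simp
  also have "\<dots> = X * (U t * U (- t))" using X by (simp add: assoc_mult_mat[of _ N N _ N _ N])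
  finally show ?thesis using X by (simp add: U_add U_0)
qed

definition frequency :: "nat \<Rightarrow> nat \<Rightarrow> nat \<Rightarrow> nat \<Rightarrow> real" where
  "frequency a b c d = \<mu> a - \<mu> b - \<mu> c + \<mu> d"

definition basis_op :: "nat \<Rightarrow> nat \<Rightarrow> complex mat" where
  "basis_op c d = mat N N (\<lambda>(i, j). w c i * cnj (w d j))"

definition twirl_term ::
    "(complex mat \<Rightarrow> complex mat) \<Rightarrow> complex mat \<Rightarrow> nat \<Rightarrow> nat \<Rightarrow> nat \<Rightarrow> nat \<Rightarrow> nat \<Rightarrow> nat \<Rightarrow> complex" where
  "twirl_term E X i j a b c d =
    w a i * cnj (w b j) * mat_coeff N w X c d * mat_coeff N w (E (basis_op c d)) a b"

lemma basis_op_carrier [simp]: "basis_op c d \<in> carrier_mat N N"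
  unfolding basis_op_def by simp

lemma phase_product:
  "phase (- t) a * phase t b * phase t c * phase (- t) d = exp (\<i> * complex_of_real (t * frequency a b c d))"
  unfolding phase_def frequency_def by (simp add: exp_add[symmetric] algebra_simps)

lemma index_flow_basis_op:
  assumes X: "X \<in> carrier_mat N N" and kl: "k < N" "l < N"
  shows "flow t X $$ (k, l) = (\<Sum>s\<in>{..<N} \<times> {..<N}.
    (phase t (fst s) * phase (- t) (snd s) * mat_coeff N w X (fst s) (snd s)) * basis_op (fst s) (snd s) $$ (k, l))"
proof -
  have "flow t X $$ (k, l) =
      (\<Sum>c<N. \<Sum>d<N. phase t c * phase (- t) d * w c k * cnj (w d l) * mat_coeff N w X c d)"
    unfolding flow_def U_def by (rule index_spectral_mat_mult3[OF X kl])
  also have "\<dots> = (\<Sum>c<N. \<Sum>d<N.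
      (phase t c * phase (- t) d * mat_coeff N w X c d) * basis_op c d $$ (k, l))"
    using kl unfolding basis_op_def by (intro sum.cong refl) (simp add: mult_ac)
  finally show ?thesis by (simp add: sum.cartesian_product case_prod_beta)
qed

lemma mat_coeff_channel_flow:
  assumes E: "channel N E" and X: "X \<in> carrier_mat N N"
  shows "mat_coeff N w (E (flow t X)) a b = (\<Sum>c<N. \<Sum>d<N.
    phase t c * phase (- t) d * mat_coeff N w X c d * mat_coeff N w (E (basis_op c d)) a b)"
proof -
  let ?S = "{..<N} \<times> {..<N}"
  define \<gamma> where "\<gamma> s = phase t (fst s) * phase (- t) (snd s) * mat_coeff N w X (fst s) (snd s)" for s
  have flow_X: "flow t X = mat N N (\<lambda>(k, l). \<Sum>s\<in>?S. \<gamma> s * basis_op (fst s) (snd s) $$ (k, l))"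
    using flow_carrier[OF X] by (intro eq_matI) (auto simp: index_flow_basis_op[OF X] \<gamma>_def)
  have "E (flow t X) $$ (k, l) = (\<Sum>s\<in>?S. \<gamma> s * E (basis_op (fst s) (snd s)) $$ (k, l))"
    if "k < N" "l < N" for k l
    unfolding flow_X by (rule linear_map_mat_sum[OF channelD(1-3)[OF E]]) (use that in auto)
  then have "mat_coeff N w (E (flow t X)) a b =
      (\<Sum>s\<in>?S. \<gamma> s * mat_coeff N w (E (basis_op (fst s) (snd s))) a b)"
    by (rule mat_coeff_sum)
  then show ?thesis unfolding \<gamma>_def by (simp add: sum.cartesian_product case_prod_beta)
qed

lemma index_flow_channel_flow:
  assumes E: "channel N E" and X: "X \<in> carrier_mat N N" and ij: "i < N" "j < N"
  shows "flow (- t) (E (flow t X)) $$ (i, j) = (\<Sum>a<N. \<Sum>b<N. \<Sum>c<N. \<Sum>d<N.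
    twirl_term E X i j a b c d * exp (\<i> * complex_of_real (t * frequency a b c d)))"
proof -
  have "flow (- t) (E (flow t X)) $$ (i, j) = (\<Sum>a<N. \<Sum>b<N.
      phase (- t) a * phase t b * w a i * cnj (w b j) * mat_coeff N w (E (flow t X)) a b)"
    using index_spectral_mat_mult3[OF channelD(1)[OF E flow_carrier[OF X]] ij,
        where u = w and \<alpha> = "phase (- t)" and \<beta> = "phase t"]
    unfolding flow_def[of "- t"] U_def by simp
  also have "\<dots> = (\<Sum>a<N. \<Sum>b<N. \<Sum>c<N. \<Sum>d<N.
      twirl_term E X i j a b c d * exp (\<i> * complex_of_real (t * frequency a b c d)))"
    unfolding mat_coeff_channel_flow[OF E X] sum_distrib_left twirl_term_def phase_product[symmetric]
    by (intro sum.cong refl) (simp add: mult_ac)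
  finally show ?thesis .
qed

text \<open>The time average of \<open>t \<mapsto> U(-t) E(U(t) X U(-t)) U(t)\<close>: by
  \<open>index_flow_channel_flow\<close>, only the terms of zero frequency survive.\<close>

definition twirl :: "(complex mat \<Rightarrow> complex mat) \<Rightarrow> complex mat \<Rightarrow> complex mat" where
  "twirl E X = mat N N (\<lambda>(i, j). \<Sum>a<N. \<Sum>b<N. \<Sum>c<N. \<Sum>d<N.
     if frequency a b c d = 0 then twirl_term E X i j a b c d else 0)"

lemma twirl_carrier [simp]: "twirl E X \<in> carrier_mat N N"
  and dim_twirl [simp]: "dim_row (twirl E X) = N" "dim_col (twirl E X) = N"
  unfolding twirl_def by simp_all

lemma flow_channel_flow_carrier:
  "channel N E \<Longrightarrow> X \<in> carrier_mat N N \<Longrightarrow> flow s (E (flow t X)) \<in> carrier_mat N N"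
  by (simp add: channelD(1))

lemma has_time_average_twirl_shift:
  assumes "channel N E" "X \<in> carrier_mat N N" "i < N" "j < N"
  shows "has_time_average (\<lambda>t. flow (- (t + s)) (E (flow (t + s) X)) $$ (i, j)) (twirl E X $$ (i, j))"
proof (rule has_time_average_cong)
  show "has_time_average (\<lambda>t. \<Sum>a<N. \<Sum>b<N. \<Sum>c<N. \<Sum>d<N.
      twirl_term E X i j a b c d * exp (\<i> * complex_of_real ((t + s) * frequency a b c d)))
    (\<Sum>a<N. \<Sum>b<N. \<Sum>c<N. \<Sum>d<N. if frequency a b c d = 0 then twirl_term E X i j a b c d else 0)"
    by (intro has_time_average_sum finite_lessThan has_time_average_exp)
  show "(\<Sum>a<N. \<Sum>b<N. \<Sum>c<N. \<Sum>d<N.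
      twirl_term E X i j a b c d * exp (\<i> * complex_of_real ((t + s) * frequency a b c d))) =
    flow (- (t + s)) (E (flow (t + s) X)) $$ (i, j)" for t
    using index_flow_channel_flow[OF assms, of "t + s"] by simp
qed (use assms in \<open>simp add: twirl_def\<close>)

lemma has_time_average_twirl:
  assumes "channel N E" "X \<in> carrier_mat N N" "i < N" "j < N"
  shows "has_time_average (\<lambda>t. flow (- t) (E (flow t X)) $$ (i, j)) (twirl E X $$ (i, j))"
  using has_time_average_twirl_shift[OF assms, of 0] by simp

lemma twirl_add:
  assumes E: "channel N E" and X: "X \<in> carrier_mat N N" and Y: "Y \<in> carrier_mat N N"
  shows "twirl E (X + Y) = twirl E X + twirl E Y"
proof (rule eq_matI)
  fix i j assume "i < dim_row (twirl E X + twirl E Y)" "j < dim_col (twirl E X + twirl E Y)"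
  then have ij: "i < N" "j < N" by auto
  have "flow (- t) (E (flow t (X + Y))) = flow (- t) (E (flow t X)) + flow (- t) (E (flow t Y))" for t
    using X Y by (simp add: flow_add channelD(1,2)[OF E])
  then have "has_time_average (\<lambda>t. flow (- t) (E (flow t (X + Y))) $$ (i, j)) (twirl E X $$ (i, j) + twirl E Y $$ (i, j))"
    using has_time_average_add[OF has_time_average_twirl[OF E X ij] has_time_average_twirl[OF E Y ij]]
      ij by (simp add: carrier_matD[OF flow_channel_flow_carrier[OF E X]] carrier_matD[OF flow_channel_flow_carrier[OF E Y]])
  then show "twirl E (X + Y) $$ (i, j) = (twirl E X + twirl E Y) $$ (i, j)"
    using has_time_average_unique[OF has_time_average_twirl[OF E _ ij]] X Y ij by simp
qed auto

lemma twirl_smult: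
  assumes E: "channel N E" and X: "X \<in> carrier_mat N N"
  shows "twirl E (c \<cdot>\<^sub>m X) = c \<cdot>\<^sub>m twirl E X"
proof (rule eq_matI)
  fix i j assume "i < dim_row (c \<cdot>\<^sub>m twirl E X)" "j < dim_col (c \<cdot>\<^sub>m twirl E X)"
  then have ij: "i < N" "j < N" by auto
  have "flow (- t) (E (flow t (c \<cdot>\<^sub>m X))) = c \<cdot>\<^sub>m flow (- t) (E (flow t X))" for t
    using X by (simp add: flow_smult channelD(1,3)[OF E])
  then have "has_time_average (\<lambda>t. flow (- t) (E (flow t (c \<cdot>\<^sub>m X))) $$ (i, j)) (c * twirl E X $$ (i, j))"
    using has_time_average_cmult[OF has_time_average_twirl[OF E X ij]] ij
    by (simp add: carrier_matD[OF flow_channel_flow_carrier[OF E X]])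
  then show "twirl E (c \<cdot>\<^sub>m X) $$ (i, j) = (c \<cdot>\<^sub>m twirl E X) $$ (i, j)"
    using has_time_average_unique[OF has_time_average_twirl[OF E _ ij]] X ij by simp
qed auto

lemma mtrace_twirl:
  assumes E: "channel N E" and X: "X \<in> carrier_mat N N"
  shows "mtrace (twirl E X) = mtrace X"
proof -
  have "(\<Sum>i<N. flow (- t) (E (flow t X)) $$ (i, i)) = mtrace X" for t
  proof -
    have EX: "E (flow t X) \<in> carrier_mat N N" using channelD(1)[OF E flow_carrier[OF X]] .
    then have "(\<Sum>i<N. flow (- t) (E (flow t X)) $$ (i, i)) = mtrace (flow (- t) (E (flow t X)))"
      unfolding mtrace_def by (simp add: carrier_matD[OF flow_carrier[OF EX]])
    also have "\<dots> = mtrace X"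
      using X EX by (simp add: mtrace_flow channelD(4)[OF E])
    finally show ?thesis .
  qed
  then have "has_time_average (\<lambda>t. \<Sum>i<N. flow (- t) (E (flow t X)) $$ (i, i)) (mtrace X)"
    by (simp add: has_time_average_const)
  moreover have "has_time_average (\<lambda>t. \<Sum>i<N. flow (- t) (E (flow t X)) $$ (i, i)) (\<Sum>i<N. twirl E X $$ (i, i))"
    by (intro has_time_average_sum finite_lessThan has_time_average_twirl[OF E X]) auto
  ultimately show ?thesis unfolding mtrace_def by (simp add: has_time_average_unique)
qed

lemma psd_id_tensor_twirl:
  assumes E: "channel N E" and P: "psd (k * N) X"
  shows "psd (k * N) (id_tensor k N (twirl E) X)"
  unfolding psd_def Let_def
proof (intro conjI allI)
  show "id_tensor k N (twirl E) X \<in> carrier_mat (k * N) (k * N)" unfolding id_tensor_def by simp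
  fix v :: "nat \<Rightarrow> complex"
  define q where "q F = (\<Sum>i<k * N. \<Sum>j<k * N. cnj (v i) * id_tensor k N F X $$ (i, j) * v j)"
    for F :: "complex mat \<Rightarrow> complex mat"
  have q: "q F = (\<Sum>i<k * N. \<Sum>j<k * N. (cnj (v i) * v j) *
      F (blk N X (i div N) (j div N)) $$ (i mod N, j mod N))" for F
    unfolding q_def by (intro sum.cong refl) (simp add: index_id_tensor mult_ac)
  have avg: "has_time_average (\<lambda>t. q (\<lambda>Y. flow (- t) (E (flow t Y)))) (q (twirl E))"
    unfolding q by (intro has_time_average_sum finite_lessThan has_time_average_cmult
        has_time_average_twirl[OF E] blk_carrier) (auto simp: mod_less_of_less_mult)
  have "Im (q (\<lambda>Y. flow (- t) (E (flow t Y)))) = 0 \<and> Re (q (\<lambda>Y. flow (- t) (E (flow t Y)))) \<ge> 0" for t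
    using psd_id_tensor_flow[OF E P, of t] unfolding psd_def Let_def q_def by metis
  then have "Im (q (twirl E)) = 0 \<and> Re (q (twirl E)) \<ge> 0"
    using has_time_average_nonneg[OF avg] by blast
  then show "Im (q (twirl E)) = 0" "0 \<le> Re (q (twirl E))" by auto
qed

text \<open>Covariance follows because averaging is invariant under a time shift.\<close>

lemma twirl_flow:
  assumes E: "channel N E" and X: "X \<in> carrier_mat N N"
  shows "twirl E (flow s X) = flow s (twirl E X)"
proof (rule eq_matI)
  fix i j assume "i < dim_row (flow s (twirl E X))" "j < dim_col (flow s (twirl E X))"
  then have ij: "i < N" "j < N" using carrier_matD[OF flow_carrier[OF twirl_carrier]] by auto
  let ?G = "\<lambda>t. flow (- (t + s)) (E (flow (t + s) X))"
  have "flow (- t) (E (flow t (flow s X))) = flow s (?G t)" for t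
    using X channelD(1)[OF E flow_carrier[OF X]] by (simp add: flow_flow)
  then have "flow (- t) (E (flow t (flow s X))) $$ (i, j) =
      (\<Sum>p<N. \<Sum>q<N. (U s $$ (i, p) * U (- s) $$ (q, j)) * ?G t $$ (p, q))" for t
    unfolding flow_def[of s] using flow_channel_flow_carrier[OF E X] ij
    by (simp add: index_mult3_mat_sum[of _ N] mult_ac)
  moreover have "has_time_average (\<lambda>t. \<Sum>p<N. \<Sum>q<N. (U s $$ (i, p) * U (- s) $$ (q, j)) * ?G t $$ (p, q))
      (\<Sum>p<N. \<Sum>q<N. (U s $$ (i, p) * U (- s) $$ (q, j)) * twirl E X $$ (p, q))"
    by (intro has_time_average_sum finite_lessThan has_time_average_cmult
        has_time_average_twirl_shift[OF E X]) auto
  ultimately have "has_time_average (\<lambda>t. flow (- t) (E (flow t (flow s X))) $$ (i, j))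
      (\<Sum>p<N. \<Sum>q<N. (U s $$ (i, p) * U (- s) $$ (q, j)) * twirl E X $$ (p, q))"
    by simp
  then have "twirl E (flow s X) $$ (i, j) =
      (\<Sum>p<N. \<Sum>q<N. (U s $$ (i, p) * U (- s) $$ (q, j)) * twirl E X $$ (p, q))"
    using has_time_average_unique[OF has_time_average_twirl[OF E flow_carrier[OF X] ij]] by blast
  also have "\<dots> = flow s (twirl E X) $$ (i, j)"
    unfolding flow_def using ij by (simp add: index_mult3_mat_sum[of _ N] mult_ac)
  finally show "twirl E (flow s X) $$ (i, j) = flow s (twirl E X) $$ (i, j)" .
qed (use carrier_matD[OF flow_carrier[OF twirl_carrier]] in auto)

lemma channel_twirl:
  assumes "channel N E"
  shows "channel N (twirl E)"
  unfolding channel_def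
  using twirl_add[OF assms] twirl_smult[OF assms] mtrace_twirl[OF assms] psd_id_tensor_twirl[OF assms]
  by auto


lemma sum_twirl_eq_const:
  assumes E: "channel N E" and X: "X \<in> carrier_mat N N" and K: "finite K"
    and pq: "\<And>k. k \<in> K \<Longrightarrow> p k < N \<and> q k < N"
    and const: "\<And>t. (\<Sum>k\<in>K. flow (- t) (E (flow t X)) $$ (p k, q k)) = c"
  shows "(\<Sum>k\<in>K. twirl E X $$ (p k, q k)) = c"
proof -
  have "has_time_average (\<lambda>t. \<Sum>k\<in>K. flow (- t) (E (flow t X)) $$ (p k, q k)) (\<Sum>k\<in>K. twirl E X $$ (p k, q k))"
    using pq by (intro has_time_average_sum K has_time_average_twirl[OF E X]) auto
  then have "has_time_average (\<lambda>t. c) (\<Sum>k\<in>K. twirl E X $$ (p k, q k))" unfolding const .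
  then show ?thesis by (rule has_time_average_unique[OF _ has_time_average_const])
qed

end

subsection \<open>Bipartite systems\<close>

locale bipartite_hamiltonians =
  fixes dR dS :: nat and uR uS :: "nat \<Rightarrow> nat \<Rightarrow> complex" and lR lS :: "nat \<Rightarrow> real"
    and HR HS :: "complex mat"
  assumes orthonormal_R: "orthonormal dR dR uR" and orthonormal_S: "orthonormal dS dS uS"
    and HR_eq: "HR = spectral_mat dR uR (\<lambda>a. complex_of_real (lR a))"
    and HS_eq: "HS = spectral_mat dS uS (\<lambda>a. complex_of_real (lS a))"
begin

sublocale R: unitary_flow dR uR lR
  by unfold_locales (rule orthonormal_R)

sublocale S: unitary_flow dS uS lS
  by unfold_locales (rule orthonormal_S)

sublocale RS: unitary_flow "dR * dS" "kron_basis dS uR uS" "\<lambda>a. lR (a div dS) + lS (a mod dS)"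
  by unfold_locales (rule orthonormal_kron_basis[OF orthonormal_R orthonormal_S])

lemma evol_R: "evol HR t A = R.flow t A"
  unfolding HR_eq by (rule R.evol_eq_flow)

lemma evol_S: "evol HS t A = S.flow t A"
  unfolding HS_eq by (rule S.evol_eq_flow)

lemma kron_U: "kron (R.U t) (S.U t) = RS.U t"
  unfolding R.U_def S.U_def RS.U_def R.phase_def S.phase_def RS.phase_def kron_spectral_mat
  by (simp add: exp_add[symmetric] algebra_simps)

lemma evol2_eq_flow: "evol2 HR HS t X = RS.flow t X"
proof -
  have "mexp (c \<cdot>\<^sub>m HR) = spectral_mat dR uR (\<lambda>a. exp (c * lR a))"
    "mexp (c \<cdot>\<^sub>m HS) = spectral_mat dS uS (\<lambda>a. exp (c * lS a))" for c
    unfolding HR_eq HS_eq by (rule R.mexp_hamiltonian, rule S.mexp_hamiltonian)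
  then show ?thesis
    unfolding evol2_def RS.flow_def kron_U[symmetric] R.U_def S.U_def R.phase_def S.phase_def
    by simp
qed

lemma RS_flow_kron:
  assumes A: "A \<in> carrier_mat dR dR" and B: "B \<in> carrier_mat dS dS"
  shows "RS.flow t (kron A B) = kron (R.flow t A) (S.flow t B)"
proof -
  have "RS.flow t (kron A B) = kron (R.U t) (S.U t) * kron A B * kron (R.U (- t)) (S.U (- t))"
    unfolding RS.flow_def kron_U ..
  also have "\<dots> = kron (R.U t * A) (S.U t * B) * kron (R.U (- t)) (S.U (- t))"
    using A B by (simp add: kron_mult[of _ dR _ _ dS])
  also have "\<dots> = kron (R.U t * A * R.U (- t)) (S.U t * B * S.U (- t))"
    using A B by (intro kron_mult[of _ dR _ _ dS] mult_carrier_mat[of _ dR dR] mult_carrier_mat[of _ dS dS]) auto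
  finally show ?thesis unfolding R.flow_def S.flow_def .
qed

lemma ptrace_S_flow:
  assumes "M \<in> carrier_mat (dR * dS) (dR * dS)"
  shows "ptrace_S dR dS (RS.flow t M) = R.flow t (ptrace_S dR dS M)"
  unfolding RS.flow_def R.flow_def kron_U[symmetric] using assms
  by (intro ptrace_S_kron_conj) (auto simp: S.U_add S.U_0)

lemma ptrace_R_flow:
  assumes "M \<in> carrier_mat (dR * dS) (dR * dS)"
  shows "ptrace_R dR dS (RS.flow t M) = S.flow t (ptrace_R dR dS M)"
  unfolding RS.flow_def S.flow_def kron_U[symmetric] using assms
  by (intro ptrace_R_kron_conj) (auto simp: R.U_add R.U_0)

lemma tt_covariant_iff_flow:
  "tt_covariant dR dS HR HS E \<longleftrightarrow>
    (\<forall>t. \<forall>X \<in> carrier_mat (dR * dS) (dR * dS). E (RS.flow t X) = RS.flow t (E X))"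
  unfolding tt_covariant_def evol2_eq_flow ..

lemma flow_kron_stationary:
  assumes rR: "\<rho>R \<in> carrier_mat dR dR" and rS: "\<rho>S \<in> carrier_mat dS dS" and comm: "\<rho>S * HS = HS * \<rho>S"
  shows "RS.flow t (kron \<rho>R \<rho>S) = kron (evol HR t \<rho>R) \<rho>S"
  using RS_flow_kron[OF rR rS] S.flow_fixed[OF rS] comm unfolding HS_eq evol_R by simp

lemma covariant_channel_marginals:
  assumes E: "channel (dR * dS) E" "tt_covariant dR dS HR HS E"
    and rR: "\<rho>R \<in> carrier_mat dR dR" and rS: "\<rho>S \<in> carrier_mat dS dS" and comm: "\<rho>S * HS = HS * \<rho>S"
    and marg: "ptrace_S dR dS (E (kron \<rho>R \<rho>S)) = \<rho>R" "ptrace_R dR dS (E (kron \<rho>R \<rho>S)) = \<rho>S'"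
  shows "ptrace_S dR dS (E (kron (evol HR t \<rho>R) \<rho>S)) = evol HR t \<rho>R \<and>
    ptrace_R dR dS (E (kron (evol HR t \<rho>R) \<rho>S)) = evol HS t \<rho>S'"
proof -
  have X: "kron \<rho>R \<rho>S \<in> carrier_mat (dR * dS) (dR * dS)" using rR rS by auto
  then have "E (kron (evol HR t \<rho>R) \<rho>S) = RS.flow t (E (kron \<rho>R \<rho>S))"
    using E(2) unfolding tt_covariant_iff_flow flow_kron_stationary[OF rR rS comm, symmetric] by blast
  then show ?thesis
    using channelD(1)[OF E(1) X] marg by (simp add: ptrace_S_flow ptrace_R_flow evol_R evol_S)
qed

lemma ptrace_S_twirl_const:
  assumes E: "channel (dR * dS) E" and X: "X \<in> carrier_mat (dR * dS) (dR * dS)"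
    and A: "A \<in> carrier_mat dR dR"
    and const: "\<And>t. ptrace_S dR dS (RS.flow (- t) (E (RS.flow t X))) = A"
  shows "ptrace_S dR dS (RS.twirl E X) = A"
proof (rule eq_matI)
  fix a b assume "a < dim_row A" "b < dim_col A"
  then have ab: "a < dR" "b < dR" using A by auto
  have "(\<Sum>s<dS. RS.flow (- t) (E (RS.flow t X)) $$ (a * dS + s, b * dS + s)) = A $$ (a, b)" for t
    using arg_cong[OF const[of t], of "\<lambda>M. M $$ (a, b)"] ab unfolding ptrace_S_def by simp
  then have "(\<Sum>s<dS. RS.twirl E X $$ (a * dS + s, b * dS + s)) = A $$ (a, b)"
    using ab by (intro RS.sum_twirl_eq_const[OF E X]) (auto simp: pair_index_less)
  then show "ptrace_S dR dS (RS.twirl E X) $$ (a, b) = A $$ (a, b)"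
    unfolding ptrace_S_def using ab by simp
qed (use A in \<open>auto simp: ptrace_S_def\<close>)

lemma ptrace_R_twirl_const:
  assumes E: "channel (dR * dS) E" and X: "X \<in> carrier_mat (dR * dS) (dR * dS)"
    and B: "B \<in> carrier_mat dS dS"
    and const: "\<And>t. ptrace_R dR dS (RS.flow (- t) (E (RS.flow t X))) = B"
  shows "ptrace_R dR dS (RS.twirl E X) = B"
proof (rule eq_matI)
  fix p q assume "p < dim_row B" "q < dim_col B"
  then have pq: "p < dS" "q < dS" using B by auto
  have "(\<Sum>r<dR. RS.flow (- t) (E (RS.flow t X)) $$ (r * dS + p, r * dS + q)) = B $$ (p, q)" for t
    using arg_cong[OF const[of t], of "\<lambda>M. M $$ (p, q)"] pq unfolding ptrace_R_def by simp
  then have "(\<Sum>r<dR. RS.twirl E X $$ (r * dS + p, r * dS + q)) = B $$ (p, q)"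
    using pq by (intro RS.sum_twirl_eq_const[OF E X]) (auto simp: pair_index_less)
  then show "ptrace_R dR dS (RS.twirl E X) $$ (p, q) = B $$ (p, q)"
    unfolding ptrace_R_def using pq by simp
qed (use B in \<open>auto simp: ptrace_R_def\<close>)

lemma twirl_marginals:
  assumes E: "channel (dR * dS) E"
    and rR: "\<rho>R \<in> carrier_mat dR dR" and rS: "\<rho>S \<in> carrier_mat dS dS" and rS': "\<rho>S' \<in> carrier_mat dS dS"
    and comm: "\<rho>S * HS = HS * \<rho>S"
    and marg: "\<forall>t. ptrace_S dR dS (E (kron (evol HR t \<rho>R) \<rho>S)) = evol HR t \<rho>R \<and>
      ptrace_R dR dS (E (kron (evol HR t \<rho>R) \<rho>S)) = evol HS t \<rho>S'"
  shows "ptrace_S dR dS (RS.twirl E (kron \<rho>R \<rho>S)) = \<rho>R \<and> ptrace_R dR dS (RS.twirl E (kron \<rho>R \<rho>S)) = \<rho>S'"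
proof -
  define X where "X = kron \<rho>R \<rho>S"
  have X: "X \<in> carrier_mat (dR * dS) (dR * dS)" unfolding X_def using rR rS by auto
  have EX: "E (RS.flow t X) \<in> carrier_mat (dR * dS) (dR * dS)" for t
    using channelD(1)[OF E RS.flow_carrier[OF X]] .
  have EX_evol: "E (RS.flow t X) = E (kron (evol HR t \<rho>R) \<rho>S)" for t
    unfolding X_def flow_kron_stationary[OF rR rS comm] ..
  \<comment> \<open>undoing the free evolution of the marginals makes them constant in time\<close>
  have "ptrace_S dR dS (RS.flow (- t) (E (RS.flow t X))) = \<rho>R" for t
  proof -
    have "ptrace_S dR dS (RS.flow (- t) (E (RS.flow t X))) = R.flow (- t) (ptrace_S dR dS (E (RS.flow t X)))"
      by (rule ptrace_S_flow[OF EX])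
    also have "\<dots> = R.flow (- t) (R.flow t \<rho>R)"
      using marg unfolding EX_evol by (simp add: evol_R)
    finally show ?thesis using rR by (simp add: R.flow_flow R.flow_0)
  qed
  moreover have "ptrace_R dR dS (RS.flow (- t) (E (RS.flow t X))) = \<rho>S'" for t
  proof -
    have "ptrace_R dR dS (RS.flow (- t) (E (RS.flow t X))) = S.flow (- t) (ptrace_R dR dS (E (RS.flow t X)))"
      by (rule ptrace_R_flow[OF EX])
    also have "\<dots> = S.flow (- t) (S.flow t \<rho>S')"
      using marg unfolding EX_evol by (simp add: evol_S)
    finally show ?thesis using rS' by (simp add: S.flow_flow S.flow_0)
  qed
  ultimately show ?thesis
    unfolding X_def[symmetric] using ptrace_S_twirl_const[OF E X rR] ptrace_R_twirl_const[OF E X rS'] by blast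
qed


end

theorem mainTheorem3:
  fixes dR dS :: nat and HR HS \<rho>R \<rho>S \<rho>S' :: "complex mat"
  assumes "hermitian dR HR" and "hermitian dS HS"
    and "density dR \<rho>R" and "density dS \<rho>S" and "density dS \<rho>S'"
    and "\<rho>S * HS = HS * \<rho>S"
  shows "((\<exists>E. channel (dR * dS) E \<and> tt_covariant dR dS HR HS E \<and>
            ptrace_S dR dS (E (kron \<rho>R \<rho>S)) = \<rho>R \<and>
            ptrace_R dR dS (E (kron \<rho>R \<rho>S)) = \<rho>S')
     \<longleftrightarrow>
         (\<exists>E. channel (dR * dS) E \<and>
            (\<forall>t :: real.
               ptrace_S dR dS (E (kron (evol HR t \<rho>R) \<rho>S)) = evol HR t \<rho>R \<and>
               ptrace_R dR dS (E (kron (evol HR t \<rho>R) \<rho>S)) = evol HS t \<rho>S'))) \<and>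
         (\<forall>E. channel (dR * dS) E \<and>
            (\<forall>t :: real.
               ptrace_S dR dS (E (kron (evol HR t \<rho>R) \<rho>S)) = evol HR t \<rho>R \<and>
               ptrace_R dR dS (E (kron (evol HR t \<rho>R) \<rho>S)) = evol HS t \<rho>S')
          \<longrightarrow> (\<exists>E'.
                (\<forall>X \<in> carrier_mat (dR * dS) (dR * dS). \<forall>i < dR * dS. \<forall>j < dR * dS.
                   ((\<lambda>T. (1 / T) *\<^sub>R integral {0..T}
                        (\<lambda>t. evol2 HR HS (- t) (E (evol2 HR HS t X)) $$ (i, j)))
                    \<longlongrightarrow> E' X $$ (i, j)) at_top) \<and>
                channel (dR * dS) E' \<and> tt_covariant dR dS HR HS E' \<and>
                ptrace_S dR dS (E' (kron \<rho>R \<rho>S)) = \<rho>R \<and>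
                ptrace_R dR dS (E' (kron \<rho>R \<rho>S)) = \<rho>S'))"
proof -
  obtain uR lR where R: "orthonormal dR dR uR" "HR = spectral_mat dR uR (\<lambda>a. complex_of_real (lR a))"
    using hermitian_spectral_decomposition[OF assms(1)] by blast
  obtain uS lS where S: "orthonormal dS dS uS" "HS = spectral_mat dS uS (\<lambda>a. complex_of_real (lS a))"
    using hermitian_spectral_decomposition[OF assms(2)] by blast
  interpret bipartite_hamiltonians dR dS uR uS lR lS HR HS
    using R S by unfold_locales
  have states: "\<rho>R \<in> carrier_mat dR dR" "\<rho>S \<in> carrier_mat dS dS" "\<rho>S' \<in> carrier_mat dS dS"
    using assms(3-5) unfolding density_def psd_def by auto
  have twirl: "(\<forall>X \<in> carrier_mat (dR * dS) (dR * dS). \<forall>i < dR * dS. \<forall>j < dR * dS.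
      ((\<lambda>T. (1 / T) *\<^sub>R integral {0..T} (\<lambda>t. evol2 HR HS (- t) (E (evol2 HR HS t X)) $$ (i, j)))
        \<longlongrightarrow> RS.twirl E X $$ (i, j)) at_top) \<and>
      channel (dR * dS) (RS.twirl E) \<and> tt_covariant dR dS HR HS (RS.twirl E) \<and>
      ptrace_S dR dS (RS.twirl E (kron \<rho>R \<rho>S)) = \<rho>R \<and>
      ptrace_R dR dS (RS.twirl E (kron \<rho>R \<rho>S)) = \<rho>S'"
    if E: "channel (dR * dS) E" and marg: "\<forall>t. ptrace_S dR dS (E (kron (evol HR t \<rho>R) \<rho>S)) = evol HR t \<rho>R \<and>
      ptrace_R dR dS (E (kron (evol HR t \<rho>R) \<rho>S)) = evol HS t \<rho>S'" for E
    using RS.has_time_average_twirl[OF E] RS.channel_twirl[OF E] RS.twirl_flow[OF E]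
      twirl_marginals[OF E states assms(6) marg]
    unfolding has_time_average_def evol2_eq_flow tt_covariant_iff_flow by blast
  show ?thesis
    using twirl covariant_channel_marginals[OF _ _ states(1,2) assms(6)] by blast
qed

end
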